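(* Let $H$ be a real Hilbert space, $I=\{1,\dots,M\}$, let $f_i,h_i,T_i$ ($i\in I$) satisfy Assumption (A1)–(A4) and the parameters satisfy Condition (C) (described below). Consider the sequences generated by the Distributed Accelerated Incremental Algorithm below, and assume that for each $i\in I$ the sequence $\{y^{(i)}_n\}$ is bounded. Then for all $i\in I$: (a) $\lim_{n\to\infty}\|z^{(i)}_n-y^{(i)}_n\|=\lim_{n\to\infty}\|x_n-w^{(i)}_n\|=0$; (b) $\lim_{n\to\infty}\|x_n-z^{(i)}_n\|=\lim_{n\to\infty}\|T_i(x_n)-x_n\|=0$.
   Context: Assumption (A1): each $f_i:H\to\mathbb{R}$ is continuous and convex. (A2): each $h_i:H\to\mathbb{R}$ is convex and Fréchet differentiable, and $\nabla h_i$ is $(1/L_i)$-Lipschitz continuous for some $L_i>0$. (A3): each $T_i:H\to H$ is firmly nonexpansive, i.e. $\|T_ix-T_iy\|^2\le\langle T_ix-T_iy,x-y\rangle$ for all $x,y$. (A4): $S=\bigcap_{i=1}^M\mathrm{Fix}\,T_i\neq\emptyset$ and, with $\psi=\sum_{i=1}^M(f_i+h_i)$, $\Omega=\{\hat x\in S:\psi(\hat x)=\min_{x\in S}\psi(x)\}\neq\emptyset$. Condition (C): $\{\theta_n\},\{\lambda_n\},\{\beta_n\},\{\alpha_n\}$ are decreasing real sequences converging to $0$ with $\theta_n\in[0,1)$, $\lambda_n\in(0,2\min_{i\in I}L_i]$, $\beta_n\in(0,1]$, $\alpha_n\in(0,1]$, and: (C1) $\sum_n\alpha_n=\infty$; (C2)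 $\lim_n\frac{1}{\alpha_{n+1}}\big|\frac{1}{\lambda_{n+1}}-\frac{1}{\lambda_n}\big|=0$; (C3) $\lim_n\frac{1}{\lambda_{n+1}}\big|1-\frac{\alpha_n}{\alpha_{n+1}}\big|=0$; (C4) $\lim_n\frac{\alpha_n}{\lambda_n}=0$; (C5) $\lim_n\frac{\theta_n}{\alpha_{n+1}\lambda_{n+1}}=0$; (C6) $\frac{\lambda_n}{\lambda_{n+1}}\le\sigma$ for some $\sigma\ge1$; (C7) $\lim_n\frac{\beta_n}{\alpha_{n+1}}=0$. $\mathrm{prox}_{\lambda g}(x)=\arg\min_y\{g(y)+\frac{1}{2\lambda}\|x-y\|^2\}$. Distributed Accelerated Incremental Algorithm: choose $x_1\in H$, $w^{(i)}_0,z^{(i)}_0,u^{(i)}\in H$ and set $d^{(i)}_1=-\nabla h_i(z^{(i)}_0)$ ($i\in I$). For $n=1,2,\dots$: set $w^{(1)}_n=x_n$; for $i=1,\dots,M$ compute $z^{(i)}_n=w^{(i)}_n+\theta_n(w^{(i)}_n-w^{(i)}_{n-1})$, $d^{(i)}_{n+1}=-\nabla h_i(z^{(i)}_n)+\beta_nd^{(i)}_n$, $y^{(i)}_n=\mathrm{prox}_{\lambda_nf_i}(z^{(i)}_n+\lambda_nd^{(i)}_{n+1})$, $w^{(i+1)}_n=\alpha_nu^{(i)}+(1-\alpha_n)T_i(y^{(i)}_n)$; then set $x_{n+1}=w^{(M+1)}_n$. *)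

theory Defs
  imports "HOL-Analysis.Analysis"
begin

definition prox :: "real \<Rightarrow> ('a::real_inner \<Rightarrow> real) \<Rightarrow> 'a \<Rightarrow> 'a" where
  "prox lam g x = (THE y. \<forall>v. g y + (1 / (2 * lam)) * (norm (x - y))\<^sup>2
                               \<le> g v + (1 / (2 * lam)) * (norm (x - v))\<^sup>2)"

definition firmly_nonexpansive :: "('a::real_inner \<Rightarrow> 'a) \<Rightarrow> bool" where
  "firmly_nonexpansive T \<longleftrightarrow>
     (\<forall>x y. (norm (T x - T y))\<^sup>2 \<le> inner (T x - T y) (x - y))"

definition Fix :: "('a \<Rightarrow> 'a) \<Rightarrow> 'a set" where
  "Fix T = {x. T x = x}"

end

theory Submission
  imports Defs
begin

(* Fix a common fixed point p of the T_i. Up to errors that vanish with theta_n, lam_n and alpha_n,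
   every stage of a sweep is a Fejer step towards p: the gradient step is nonexpansive by the
   Baillon-Haddad co-coercivity of grad h_i, and the proximal step followed by the firmly nonexpansive
   T_i decreases ||. - p||^2 by ||z - y||^2 + ||T y - y||^2. Comparing two consecutive sweeps gives
   ||x_(n+2) - x_(n+1)|| <= (1 - alpha_(n+1)) ||x_(n+1) - x_n|| + o(alpha_(n+1)) by (C2), (C3), (C5), (C7),
   so Xu's lemma yields ||x_(n+1) - x_n|| -> 0. Summing the Fejer inequalities of one sweep bounds the
   residuals by ||x_n - p||^2 - ||x_(n+1) - p||^2 + o(1), which tends to 0 since the iterates are bounded
   and asymptotically regular; the other limits follow from the triangle inequality. *)

section \<open>Smooth convex functions\<close>

lemma has_real_derivative_along_line:
  fixes h :: "'a::real_inner \<Rightarrow> real"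
  assumes "\<And>p. (h has_derivative (\<lambda>v. inner (g p) v)) (at p)"
  shows "((\<lambda>t. h (a + t *\<^sub>R (b - a))) has_real_derivative inner (g (a + t *\<^sub>R (b - a))) (b - a))
           (at t within S)"
proof -
  have "((\<lambda>t. a + t *\<^sub>R (b - a)) has_derivative (\<lambda>s. s *\<^sub>R (b - a))) (at t within S)"
    by (auto intro!: derivative_eq_intros)
  from has_derivative_compose[OF this assms]
  show ?thesis
    by (simp add: has_field_derivative_def mult_commute_abs)
qed

lemma convex_on_gradient_ineq:
  fixes h :: "'a::real_inner \<Rightarrow> real"
  assumes cv: "convex_on UNIV h" and d: "\<And>p. (h has_derivative (\<lambda>v. inner (g p) v)) (at p)"
  shows "h a + inner (g a) (b - a) \<le> h b"
proof -
  let ?\<phi> = "\<lambda>t::real. h (a + t *\<^sub>R (b - a))"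
  have "convex_on UNIV ?\<phi>"
  proof (rule convex_onI)
    fix t x y :: real assume "0 < t" "t < 1"
    moreover have "a + ((1 - t) * x + t * y) *\<^sub>R (b - a)
        = (1 - t) *\<^sub>R (a + x *\<^sub>R (b - a)) + t *\<^sub>R (a + y *\<^sub>R (b - a))"
      by (simp add: algebra_simps)
    ultimately show "?\<phi> ((1 - t) *\<^sub>R x + t *\<^sub>R y) \<le> (1 - t) * ?\<phi> x + t * ?\<phi> y"
      using convex_onD[OF cv, of t "a + x *\<^sub>R (b - a)" "a + y *\<^sub>R (b - a)"] by simp
  qed simp
  then have "inner (g (a + 0 *\<^sub>R (b - a))) (b - a) * (1 - 0) \<le> ?\<phi> 1 - ?\<phi> 0"
    by (rule convex_on_imp_above_tangent)
       (use has_real_derivative_along_line[OF d, of a b 0 UNIV] in auto)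
  then show ?thesis by simp
qed

lemma descent_lemma:
  fixes h :: "'a::real_inner \<Rightarrow> real"
  assumes d: "\<And>p. (h has_derivative (\<lambda>v. inner (g p) v)) (at p)"
    and L: "L > 0" and lip: "\<And>p q. norm (g p - g q) \<le> (1 / L) * norm (p - q)"
  shows "h b \<le> h a + inner (g a) (b - a) + (1 / (2 * L)) * (norm (b - a))\<^sup>2"
proof -
  define G where "G t = h (a + t *\<^sub>R (b - a)) - t * inner (g a) (b - a) - t\<^sup>2 / (2 * L) * (norm (b - a))\<^sup>2"
    for t
  have "G 1 \<le> G 0"
  proof (rule DERIV_nonpos_imp_nonincreasing[of 0 1 G])
    fix t :: real assume t: "0 \<le> t" "t \<le> 1"
    let ?G' = "inner (g (a + t *\<^sub>R (b - a)) - g a) (b - a) - t / L * (norm (b - a))\<^sup>2"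
    have "(G has_real_derivative inner (g (a + t *\<^sub>R (b - a))) (b - a) - inner (g a) (b - a)
        - 2 * t / (2 * L) * (norm (b - a))\<^sup>2) (at t)"
      unfolding G_def
      by (intro DERIV_diff has_real_derivative_along_line[OF d])
         (use L in \<open>auto intro!: derivative_eq_intros\<close>)
    then have "(G has_real_derivative ?G') (at t)"
      using L by (simp add: inner_diff_left)
    moreover have "inner (g (a + t *\<^sub>R (b - a)) - g a) (b - a) \<le> t / L * (norm (b - a))\<^sup>2"
    proof -
      have "inner (g (a + t *\<^sub>R (b - a)) - g a) (b - a) \<le> norm (g (a + t *\<^sub>R (b - a)) - g a) * norm (b - a)"
        by (rule norm_cauchy_schwarz)
      also have "\<dots> \<le> ((1 / L) * norm (t *\<^sub>R (b - a))) * norm (b - a)"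
        using lip[of "a + t *\<^sub>R (b - a)" a] by (intro mult_right_mono) auto
      also have "\<dots> = t / L * (norm (b - a))\<^sup>2"
        using t by (simp add: power2_eq_square)
      finally show ?thesis .
    qed
    ultimately show "\<exists>y. (G has_real_derivative y) (at t) \<and> y \<le> 0"
      by auto
  qed simp
  then show ?thesis by (simp add: G_def)
qed

lemma smooth_convex_lower_bound:
  fixes h :: "'a::real_inner \<Rightarrow> real"
  assumes cv: "convex_on UNIV h" and d: "\<And>p. (h has_derivative (\<lambda>v. inner (g p) v)) (at p)"
    and L: "L > 0" and lip: "\<And>p q. norm (g p - g q) \<le> (1 / L) * norm (p - q)"
  shows "h p + inner (g p) (q - p) + L / 2 * (norm (g p - g q))\<^sup>2 \<le> h q"
proof -
  define r where "r = q - L *\<^sub>R (g q - g p)"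
  \<comment> \<open>compare the tangent at p and the quadratic upper model at q in the point r\<close>
  have "h p + inner (g p) (r - p) \<le> h r"
    by (rule convex_on_gradient_ineq[OF cv d])
  also have "\<dots> \<le> h q + inner (g q) (r - q) + (1 / (2 * L)) * (norm (r - q))\<^sup>2"
    by (rule descent_lemma[OF d L lip])
  also have "\<dots> = h q - L * inner (g q) (g q - g p) + L / 2 * (norm (g q - g p))\<^sup>2"
    using L by (simp add: r_def inner_diff_right power2_eq_square)
  finally have "h p + inner (g p) (q - p) - L * inner (g p) (g q - g p)
      \<le> h q - L * inner (g q) (g q - g p) + L / 2 * (norm (g q - g p))\<^sup>2"
    by (simp add: r_def inner_diff_right)
  moreover have "L * inner (g q) (g q - g p) - L * inner (g p) (g q - g p)
      = 2 * (L / 2 * (norm (g q - g p))\<^sup>2)"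
    by (simp add: power2_norm_eq_inner inner_diff_left right_diff_distrib[symmetric])
  ultimately show ?thesis
    unfolding norm_minus_commute[of "g p" "g q"] by linarith
qed

lemma gradient_cocoercive:
  fixes h :: "'a::real_inner \<Rightarrow> real"
  assumes cv: "convex_on UNIV h" and d: "\<And>p. (h has_derivative (\<lambda>v. inner (g p) v)) (at p)"
    and L: "L > 0" and lip: "\<And>p q. norm (g p - g q) \<le> (1 / L) * norm (p - q)"
  shows "L * (norm (g x - g y))\<^sup>2 \<le> inner (g x - g y) (x - y)"
  using smooth_convex_lower_bound[OF assms, of x y] smooth_convex_lower_bound[OF assms, of y x]
  by (simp add: norm_minus_commute inner_diff_left inner_diff_right inner_commute algebra_simps)

lemma gradient_step_nonexpansive:
  fixes h :: "'a::real_inner \<Rightarrow> real"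
  assumes cv: "convex_on UNIV h" and d: "\<And>p. (h has_derivative (\<lambda>v. inner (g p) v)) (at p)"
    and L: "L > 0" and lip: "\<And>p q. norm (g p - g q) \<le> (1 / L) * norm (p - q)"
    and lam: "0 \<le> lam" "lam \<le> 2 * L"
  shows "norm ((x - lam *\<^sub>R g x) - (y - lam *\<^sub>R g y)) \<le> norm (x - y)"
proof -
  let ?D = "x - y" and ?E = "g x - g y"
  have "lam * (lam * (norm ?E)\<^sup>2) \<le> lam * (2 * inner ?E ?D)"
    using lam gradient_cocoercive[OF cv d L lip, of x y]
    by (intro mult_left_mono) (auto intro: order_trans[OF mult_right_mono])
  moreover have "(norm ((x - lam *\<^sub>R g x) - (y - lam *\<^sub>R g y)))\<^sup>2
      = (norm ?D)\<^sup>2 - 2 * lam * inner ?E ?D + lam\<^sup>2 * (norm ?E)\<^sup>2"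
    unfolding power2_norm_eq_inner
    by (simp add: inner_diff_left inner_diff_right inner_commute power2_eq_square algebra_simps)
  ultimately have "(norm ((x - lam *\<^sub>R g x) - (y - lam *\<^sub>R g y)))\<^sup>2 \<le> (norm ?D)\<^sup>2"
    by (simp add: power2_eq_square algebra_simps)
  then show ?thesis
    by (rule power2_le_imp_le) simp
qed

section \<open>The proximal map\<close>

lemma convex_continuous_affine_minorant:
  fixes f :: "'a::real_normed_vector \<Rightarrow> real"
  assumes cont: "continuous_on UNIV f" and cv: "convex_on UNIV f"
  obtains a b where "0 \<le> b" "\<And>q. a - b * norm q \<le> f q"
proof -
  have "isCont f 0"
    using cont by (simp add: continuous_on_eq_continuous_at)
  then obtain r where r: "r > 0" "\<forall>q. dist q 0 < r \<longrightarrow> dist (f q) (f 0) < 1"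
    unfolding continuous_at_eps_delta using zero_less_one by blast
  define s where "s = r / 2"
  have s: "s > 0" "s < r" using r by (auto simp: s_def)
  have near: "f 0 - 1 \<le> f q" if "norm q \<le> s" for q
    using r(2)[rule_format, of q] that s by (auto simp: dist_real_def abs_less_iff)
  have "f 0 - 1 - (1 / s) * norm q \<le> f q" for q
  proof (cases "norm q \<le> s")
    case True
    have "0 \<le> (1 / s) * norm q"
      using s by simp
    then show ?thesis
      using near[OF True] by linarith
  next
    case False
    define t where "t = s / norm q"
    have t: "0 < t" "t < 1" using False s by (auto simp: t_def divide_less_eq intro!: divide_pos_pos)
    \<comment> \<open>convexity on the segment from 0 to q, through the point t q of norm s\<close>
    have "f 0 - 1 \<le> f ((1 - t) *\<^sub>R 0 + t *\<^sub>R q)"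
      using False s by (intro near) (simp add: t_def)
    also have "\<dots> \<le> (1 - t) * f 0 + t * f q"
      using t by (intro convex_onD[OF cv]) auto
    finally have "f 0 - 1 / t \<le> f q"
      using t by (simp add: field_simps)
    then show ?thesis
      using False s by (simp add: t_def)
  qed
  then show ?thesis
    using s by (intro that[of "1 / s"]) auto
qed

lemma midpoint_strongly_convex_minimizing_Cauchy:
  fixes \<phi> :: "'a::real_normed_vector \<Rightarrow> real"
  assumes mid: "\<And>a b. \<phi> ((1/2) *\<^sub>R a + (1/2) *\<^sub>R b) \<le> (\<phi> a + \<phi> b) / 2 - \<kappa> * (norm (a - b))\<^sup>2"
    and \<kappa>: "\<kappa> > 0" and low: "\<And>v. m \<le> \<phi> v" and lim: "(\<lambda>n. \<phi> (q n)) \<longlonglongrightarrow> m"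
  shows "Cauchy q"
proof (rule metric_CauchyI)
  fix e :: real assume e: "e > 0"
  then have "\<forall>\<^sub>F n in sequentially. \<phi> (q n) < m + \<kappa> * e\<^sup>2"
    using \<kappa> by (intro order_tendstoD(2)[OF lim]) simp
  then obtain N where N: "\<And>n. n \<ge> N \<Longrightarrow> \<phi> (q n) < m + \<kappa> * e\<^sup>2"
    by (auto simp: eventually_sequentially)
  have close: "dist (q i) (q j) < e" if "i \<ge> N" "j \<ge> N" for i j
  proof -
    have "m \<le> (\<phi> (q i) + \<phi> (q j)) / 2 - \<kappa> * (norm (q i - q j))\<^sup>2"
      using order_trans[OF low mid] .
    then have "\<kappa> * (norm (q i - q j))\<^sup>2 < \<kappa> * e\<^sup>2"
      using N[OF that(1)] N[OF that(2)] by argo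
    then have "(norm (q i - q j))\<^sup>2 < e\<^sup>2"
      using \<kappa> by simp
    then show ?thesis
      using e by (simp add: dist_norm power2_less_imp_less)
  qed
  then show "\<exists>N. \<forall>i\<ge>N. \<forall>j\<ge>N. dist (q i) (q j) < e"
    by (intro exI[of _ N]) auto
qed

lemma midpoint_strongly_convex_has_min:
  fixes \<phi> :: "'a::{real_normed_vector, complete_space} \<Rightarrow> real"
  assumes cont: "continuous_on UNIV \<phi>" and bdd: "bdd_below (range \<phi>)"
    and mid: "\<And>a b. \<phi> ((1/2) *\<^sub>R a + (1/2) *\<^sub>R b) \<le> (\<phi> a + \<phi> b) / 2 - \<kappa> * (norm (a - b))\<^sup>2"
    and \<kappa>: "\<kappa> > 0"
  obtains y where "\<And>v. \<phi> y \<le> \<phi> v"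
proof -
  define m where "m = Inf (range \<phi>)"
  have low: "m \<le> \<phi> v" for v
    unfolding m_def by (rule cInf_lower[OF _ bdd]) simp
  have "\<exists>q. \<phi> q < m + 1 / Suc k" for k
  proof -
    have "Inf (range \<phi>) < m + 1 / Suc k"
      by (simp add: m_def)
    then show ?thesis
      by (subst (asm) cInf_less_iff[OF _ bdd]) auto
  qed
  from choice[OF allI[OF this]] obtain q where q: "\<forall>k. \<phi> (q k) < m + 1 / Suc k"
    by (rule exE)
  have lim: "(\<lambda>k. \<phi> (q k)) \<longlonglongrightarrow> m"
  proof (rule tendsto_sandwich[of "\<lambda>_. m" _ _ "\<lambda>k. m + 1 / Suc k"])
    show "(\<lambda>k. m + 1 / Suc k) \<longlonglongrightarrow> m"
      using tendsto_add[OF tendsto_const LIMSEQ_inverse_real_of_nat] by (simp add: inverse_eq_divide)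
    show "\<forall>\<^sub>F k in sequentially. m \<le> \<phi> (q k)"
      using low by simp
    show "\<forall>\<^sub>F k in sequentially. \<phi> (q k) \<le> m + 1 / Suc k"
      using q by (intro always_eventually) (simp add: less_imp_le)
  qed simp
  then have "Cauchy q"
    by (rule midpoint_strongly_convex_minimizing_Cauchy[OF mid \<kappa> low])
  then obtain y where y: "q \<longlonglongrightarrow> y"
    unfolding Cauchy_convergent_iff convergent_def ..
  have "isCont \<phi> y"
    using cont by (simp add: continuous_on_eq_continuous_at)
  then have "(\<lambda>k. \<phi> (q k)) \<longlonglongrightarrow> \<phi> y"
    using y by (rule isCont_tendsto_compose)
  with lim have "m = \<phi> y"
    by (rule LIMSEQ_unique)
  with low show ?thesis
    by (intro that) simp
qed

lemma midpoint_strongly_convex_min_unique: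
  fixes \<phi> :: "'a::real_normed_vector \<Rightarrow> real"
  assumes mid: "\<And>a b. \<phi> ((1/2) *\<^sub>R a + (1/2) *\<^sub>R b) \<le> (\<phi> a + \<phi> b) / 2 - \<kappa> * (norm (a - b))\<^sup>2"
    and \<kappa>: "\<kappa> > 0" and y: "\<And>v. \<phi> y \<le> \<phi> v" and y': "\<And>v. \<phi> y' \<le> \<phi> v"
  shows "y = y'"
proof -
  have "\<phi> y \<le> (\<phi> y + \<phi> y') / 2 - \<kappa> * (norm (y - y'))\<^sup>2"
    using order_trans[OF y mid] .
  then have "\<kappa> * (norm (y - y'))\<^sup>2 \<le> 0"
    using y'[of y] by argo
  then show ?thesis
    using \<kappa> by (simp add: mult_le_0_iff)
qed

definition prox_objective :: "real \<Rightarrow> ('a::real_inner \<Rightarrow> real) \<Rightarrow> 'a \<Rightarrow> 'a \<Rightarrow> real" where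
  "prox_objective lam g x q = g q + (1 / (2 * lam)) * (norm (x - q))\<^sup>2"

lemma prox_objective_midpoint:
  assumes cv: "convex_on UNIV g"
  shows "prox_objective lam g x ((1/2) *\<^sub>R a + (1/2) *\<^sub>R b)
    \<le> (prox_objective lam g x a + prox_objective lam g x b) / 2 - 1 / (8 * lam) * (norm (a - b))\<^sup>2"
proof -
  define c where "c = 1 / (2 * lam)"
  have d_eq: "(norm (a - b))\<^sup>2 / (8 * lam) = c * (norm (a - b))\<^sup>2 / 4"
    by (simp add: c_def)
  have "g ((1 - 1/2) *\<^sub>R a + (1/2) *\<^sub>R b) \<le> (1 - 1/2) * g a + (1/2) * g b"
    by (intro convex_onD[OF cv]) auto
  moreover have "(norm (x - ((1/2) *\<^sub>R a + (1/2) *\<^sub>R b)))\<^sup>2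
      = ((norm (x - a))\<^sup>2 + (norm (x - b))\<^sup>2) / 2 - (norm (a - b))\<^sup>2 / 4"
    unfolding power2_norm_eq_inner
    by (simp add: inner_diff_left inner_diff_right inner_add_left inner_add_right inner_commute field_simps)
  ultimately show ?thesis
    unfolding prox_objective_def c_def[symmetric]
    by (simp add: right_diff_distrib distrib_left) (use d_eq in argo)
qed

lemma prox_objective_bdd_below:
  fixes g :: "'a::real_inner \<Rightarrow> real"
  assumes "continuous_on UNIV g" "convex_on UNIV g" and lam: "lam > 0"
  shows "bdd_below (range (prox_objective lam g x))"
proof -
  obtain a b where b: "0 \<le> b" and ab: "\<And>q. a - b * norm q \<le> g q"
    by (rule convex_continuous_affine_minorant[OF assms(1,2)]) blast
  define c where "c = 1 / (2 * lam)"
  have c: "c > 0"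
    using lam by (simp add: c_def)
  have "a - b * norm x - b\<^sup>2 / (4 * c) \<le> prox_objective lam g x q" for q
  proof -
    define r where "r = norm (x - q)"
    have "norm q \<le> r + norm x"
      using norm_triangle_ineq2[of q x] by (simp add: norm_minus_commute r_def)
    then have "b * norm q \<le> b * (r + norm x)"
      using b by (rule mult_left_mono)
    then have "a - b * (r + norm x) \<le> g q"
      using ab[of q] by linarith
    moreover have "- b\<^sup>2 / (4 * c) \<le> c * r\<^sup>2 - b * r"
    proof -
      have "0 \<le> (2 * c * r - b)\<^sup>2 / (4 * c)"
        using c by (intro divide_nonneg_pos) auto
      also have "\<dots> = c * r\<^sup>2 - b * r + b\<^sup>2 / (4 * c)"
        using c by (simp add: field_simps power2_eq_square)
      finally show ?thesis
        by linarith
    qed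
    ultimately show ?thesis
      unfolding prox_objective_def c_def[symmetric] r_def[symmetric] by (simp add: algebra_simps)
  qed
  then show ?thesis
    by (intro bdd_belowI2)
qed

lemma prox_minimizes:
  fixes g :: "'a::{real_inner, complete_space} \<Rightarrow> real"
  assumes cont: "continuous_on UNIV g" and cv: "convex_on UNIV g" and lam: "lam > 0"
  shows "prox_objective lam g x (prox lam g x) \<le> prox_objective lam g x v"
proof -
  let ?\<phi> = "prox_objective lam g x"
  have mid: "?\<phi> ((1/2) *\<^sub>R a + (1/2) *\<^sub>R b) \<le> (?\<phi> a + ?\<phi> b) / 2 - 1 / (8 * lam) * (norm (a - b))\<^sup>2"
    for a b by (rule prox_objective_midpoint[OF cv])
  have \<kappa>: "1 / (8 * lam) > 0"
    using lam by simp
  have "continuous_on UNIV ?\<phi>"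
    unfolding prox_objective_def by (intro continuous_intros cont)
  then obtain y where y: "\<And>v. ?\<phi> y \<le> ?\<phi> v"
    using midpoint_strongly_convex_has_min[OF _ prox_objective_bdd_below[OF cont cv lam] mid \<kappa>]
    by blast
  have "\<exists>!y. \<forall>v. ?\<phi> y \<le> ?\<phi> v"
    using y midpoint_strongly_convex_min_unique[OF mid \<kappa>] by blast
  then have "\<forall>v. ?\<phi> (THE y. \<forall>v. ?\<phi> y \<le> ?\<phi> v) \<le> ?\<phi> v"
    by (rule theI')
  then show ?thesis
    unfolding prox_def prox_objective_def by blast
qed

lemma prox_variational_ineq:
  fixes g :: "'a::{real_inner, complete_space} \<Rightarrow> real"
  assumes cont: "continuous_on UNIV g" and cv: "convex_on UNIV g" and lam: "lam > 0"
  shows "g (prox lam g x) + inner (x - prox lam g x) (q - prox lam g x) / lam \<le> g q"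
proof -
  let ?y = "prox lam g x"
  define c where "c = 1 / (2 * lam)"
  define I where "I = inner (q - ?y) (x - ?y)"
  define N where "N = (norm (q - ?y))\<^sup>2"
  have near: "g ?y \<le> (g q - 2 * c * I) + t * (c * N)" if t: "0 < t" "t < 1" for t
  proof -
    let ?z = "(1 - t) *\<^sub>R ?y + t *\<^sub>R q"
    have "g ?y + c * (norm (x - ?y))\<^sup>2 \<le> g ?z + c * (norm (x - ?z))\<^sup>2"
      using prox_minimizes[OF cont cv lam, of x ?z] by (simp add: prox_objective_def c_def)
    moreover have "g ?z \<le> (1 - t) * g ?y + t * g q"
      using t by (intro convex_onD[OF cv]) auto
    moreover have "c * (norm (x - ?z))\<^sup>2 = c * (norm (x - ?y))\<^sup>2 - t * (2 * c * I) + t * (t * (c * N))"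
    proof -
      have "x - ?z = (x - ?y) - t *\<^sub>R (q - ?y)"
        by (simp add: algebra_simps)
      then show ?thesis
        unfolding I_def N_def power2_norm_eq_inner
        by (simp add: inner_diff_left inner_diff_right inner_commute algebra_simps)
    qed
    moreover have "(1 - t) * g ?y = g ?y - t * g ?y"
      by (simp add: algebra_simps)
    ultimately have "t * g ?y \<le> t * ((g q - 2 * c * I) + t * (c * N))"
      unfolding distrib_left right_diff_distrib by linarith
    then show ?thesis
      using t by simp
  qed
  have "g ?y \<le> g q - 2 * c * I"
  proof (rule tendsto_lowerbound)
    show "((\<lambda>t. (g q - 2 * c * I) + t * (c * N)) \<longlongrightarrow> g q - 2 * c * I) (at_right 0)"
      by (auto intro!: tendsto_eq_intros)
    show "\<forall>\<^sub>F t in at_right 0. g ?y \<le> (g q - 2 * c * I) + t * (c * N)"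
      using eventually_at_right_real[OF zero_less_one] by eventually_elim (auto intro: near)
  qed simp
  moreover have "2 * c * I = inner (x - ?y) (q - ?y) / lam"
    using lam by (simp add: c_def I_def inner_commute)
  ultimately show ?thesis
    by simp
qed

lemma prox_perturbation:
  fixes g :: "'a::{real_inner, complete_space} \<Rightarrow> real"
  assumes cont: "continuous_on UNIV g" and cv: "convex_on UNIV g" and lam: "lam > 0" and mu: "mu > 0"
  shows "norm (prox lam g v - prox mu g v') \<le> norm (v - v') + \<bar>lam / mu - 1\<bar> * norm (v' - prox mu g v')"
proof -
  define y where "y = prox lam g v"
  define y' where "y' = prox mu g v'"
  define D where "D = y - y'"
  define c where "c = lam / mu"
  \<comment> \<open>each proximal point tested in the variational inequality of the other\<close>
  have "inner (v - y) (y' - y) / lam + inner (v' - y') (y - y') / mu \<le> 0"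
    using prox_variational_ineq[OF cont cv lam, of v y'] prox_variational_ineq[OF cont cv mu, of v' y]
    unfolding y_def y'_def by linarith
  then have "inner (v - y) (y' - y) + c * inner (v' - y') D \<le> 0"
    using lam mu by (simp add: c_def D_def field_simps)
  moreover have "v - y = (v - v') + (v' - y') - D" "y' - y = - D"
    by (simp_all add: D_def)
  ultimately have "(norm D)\<^sup>2 \<le> inner (v - v') D + (1 - c) * inner (v' - y') D"
    by (simp add: power2_norm_eq_inner inner_diff_left inner_add_left algebra_simps)
  also have "\<dots> \<le> norm (v - v') * norm D + \<bar>1 - c\<bar> * (norm (v' - y') * norm D)"
    by (intro add_mono norm_cauchy_schwarz order_trans[OF _ mult_left_mono[OF Cauchy_Schwarz_ineq2]])
       (auto simp: abs_mult[symmetric])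
  finally have "norm D * norm D \<le> (norm (v - v') + \<bar>1 - c\<bar> * norm (v' - y')) * norm D"
    by (simp add: power2_eq_square algebra_simps)
  then have "norm D \<le> norm (v - v') + \<bar>1 - c\<bar> * norm (v' - y')"
    by (cases "norm D = 0") auto
  then show ?thesis
    by (simp add: D_def y_def y'_def c_def abs_minus_commute)
qed

section \<open>Firmly nonexpansive maps\<close>

lemma firmly_nonexpansive_imp_nonexpansive:
  assumes "firmly_nonexpansive T"
  shows "norm (T a - T b) \<le> norm (a - b)"
proof -
  have "norm (T a - T b) * norm (T a - T b) \<le> norm (T a - T b) * norm (a - b)"
    using assms norm_cauchy_schwarz[of "T a - T b" "a - b"]
    unfolding firmly_nonexpansive_def power2_eq_square by (meson order_trans)
  then show ?thesis
    by (cases "norm (T a - T b) = 0") auto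
qed

lemma firmly_nonexpansive_fixpoint_ineq:
  assumes "firmly_nonexpansive T" and "T p = p"
  shows "(norm (T q - p))\<^sup>2 \<le> (norm (q - p))\<^sup>2 - (norm (T q - q))\<^sup>2"
proof -
  have "(norm (T q - p))\<^sup>2 \<le> inner (T q - p) (q - p)"
    using assms unfolding firmly_nonexpansive_def by metis
  moreover have "(norm (T q - q))\<^sup>2 = (norm (T q - p))\<^sup>2 - 2 * inner (T q - p) (q - p) + (norm (q - p))\<^sup>2"
    using dot_norm_neg[of "T q - p" "q - p"] by simp
  ultimately show ?thesis
    by linarith
qed

lemma prox_firmly_nonexpansive_fejer:
  fixes g :: "'a::{real_inner, complete_space} \<Rightarrow> real" and v :: 'a
  assumes cont: "continuous_on UNIV g" and cv: "convex_on UNIV g" and lam: "lam > 0"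
    and T: "firmly_nonexpansive T" and p: "T p = p"
  defines "y \<equiv> prox lam g v"
  shows "(norm (T y - p))\<^sup>2
    \<le> (norm (v - p))\<^sup>2 - (norm (v - y))\<^sup>2 - (norm (T y - y))\<^sup>2 + 2 * lam * (g p - g y)"
proof -
  have "inner (v - y) (p - y) \<le> lam * (g p - g y)"
    using prox_variational_ineq[OF cont cv lam, of v p] lam
    unfolding y_def by (simp add: field_simps)
  moreover have "(norm (v - p))\<^sup>2 = (norm (v - y))\<^sup>2 + (norm (y - p))\<^sup>2 - 2 * inner (v - y) (p - y)"
    using dot_norm_neg[of "v - y" "p - y"] by (simp add: norm_minus_commute)
  ultimately show ?thesis
    using firmly_nonexpansive_fixpoint_ineq[OF T p, of y] by linarith
qed

section \<open>Sequences\<close>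

lemma Bseq_add_seq:
  fixes f g :: "nat \<Rightarrow> 'a::real_normed_vector"
  assumes "Bseq f" "Bseq g"
  shows "Bseq (\<lambda>n. f n + g n)"
proof -
  obtain K K' where K: "\<And>n. norm (f n) \<le> K" and K': "\<And>n. norm (g n) \<le> K'"
    using assms by (auto simp: Bseq_def)
  have "norm (f n + g n) \<le> K + K'" for n
    using norm_triangle_ineq[of "f n" "g n"] K[of n] K'[of n] by linarith
  then show ?thesis
    by (rule BseqI')
qed

lemma Bseq_diff_seq:
  fixes f g :: "nat \<Rightarrow> 'a::real_normed_vector"
  assumes "Bseq f" "Bseq g"
  shows "Bseq (\<lambda>n. f n - g n)"
proof -
  have "Bseq (\<lambda>n. - g n)"
    using assms(2) by (simp add: Bseq_minus_iff)
  from Bseq_add_seq[OF assms(1) this] show ?thesis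
    by simp
qed

lemma Bseq_scaleR_seq:
  fixes f :: "nat \<Rightarrow> 'a::real_normed_vector"
  assumes "Bseq c" "Bseq f"
  shows "Bseq (\<lambda>n. c n *\<^sub>R f n)"
proof -
  obtain K K' where K: "\<And>n. norm (c n) \<le> K" and K': "\<And>n. norm (f n) \<le> K'"
    using assms by (auto simp: Bseq_def)
  have "norm (c n *\<^sub>R f n) \<le> K * K'" for n
    using mult_mono[OF K[of n] K'[of n]] order_trans[OF norm_ge_zero K[of n]]
      order_trans[OF norm_ge_zero K'[of n]] by simp
  then show ?thesis
    by (rule BseqI')
qed

lemma Bseq_if_tendsto_diff:
  fixes f g :: "nat \<Rightarrow> 'a::real_normed_vector"
  assumes "Bseq f" "(\<lambda>n. g n - f n) \<longlonglongrightarrow> l"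
  shows "Bseq g"
  using Bseq_add_seq[OF assms(1) convergent_imp_Bseq[OF convergentI[OF assms(2)]]] by simp

lemma tendsto_zero_mult_Bseq:
  fixes b :: "nat \<Rightarrow> 'a::real_normed_vector"
  assumes "r \<longlonglongrightarrow> 0" "Bseq b"
  shows "(\<lambda>n. r n * norm (b n)) \<longlonglongrightarrow> 0"
proof -
  obtain K where "\<forall>n. norm (b n) \<le> K"
    using assms(2) by (rule BseqE)
  then have "\<forall>\<^sub>F n in sequentially. norm (norm (b n)) \<le> K"
    by simp
  with assms(1) show ?thesis
    by (rule lim_null_mult_right_bounded)
qed

definition sq_perturbation :: "'a::real_normed_vector \<Rightarrow> 'a \<Rightarrow> real" where
  "sq_perturbation a b = norm (a - b) * (2 * norm b + norm (a - b))"

lemma norm_sq_le_perturbed: "(norm a)\<^sup>2 \<le> (norm b)\<^sup>2 + sq_perturbation a b"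
proof -
  have "norm a \<le> norm b + norm (a - b)"
    using norm_triangle_sub[of a b] by simp
  then have "(norm a)\<^sup>2 \<le> (norm b + norm (a - b))\<^sup>2"
    by (simp add: power_mono)
  then show ?thesis
    by (simp add: sq_perturbation_def power2_eq_square algebra_simps)
qed

lemma sq_perturbation_tendsto_zero:
  fixes a b :: "nat \<Rightarrow> 'a::real_normed_vector"
  assumes lim: "(\<lambda>n. a n - b n) \<longlonglongrightarrow> 0" and b: "Bseq b"
  shows "(\<lambda>n. sq_perturbation (a n) (b n)) \<longlonglongrightarrow> 0"
proof -
  obtain K where K: "\<And>n. norm (b n) \<le> K"
    using b by (auto simp: Bseq_def)
  obtain K' where K': "\<And>n. norm (a n - b n) \<le> K'"
    using convergent_imp_Bseq[OF convergentI[OF lim]] by (auto simp: Bseq_def)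
  have "\<forall>\<^sub>F n in sequentially. norm (2 * norm (b n) + norm (a n - b n)) \<le> 2 * K + K'"
    using K K' by (intro always_eventually allI) (simp add: add_mono)
  with tendsto_norm_zero[OF lim] show ?thesis
    unfolding sq_perturbation_def by (rule lim_null_mult_right_bounded)
qed

lemma tendsto_zero_if_norm_sq_le:
  fixes a :: "nat \<Rightarrow> 'a::real_normed_vector"
  assumes le: "\<forall>\<^sub>F n in sequentially. (norm (a n))\<^sup>2 \<le> e n" and e: "e \<longlonglongrightarrow> 0"
  shows "a \<longlonglongrightarrow> 0"
proof (rule Lim_null_comparison)
  show "\<forall>\<^sub>F n in sequentially. norm (a n) \<le> sqrt (e n)"
    using le by eventually_elim (simp add: real_le_rsqrt)
  show "(\<lambda>n. sqrt (e n)) \<longlonglongrightarrow> 0"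
    using tendsto_real_sqrt[OF e] by simp
qed

lemma Bseq_contractive_recursion:
  fixes d :: "nat \<Rightarrow> 'a::real_normed_vector"
  assumes rec: "\<forall>\<^sub>F n in sequentially. norm (d (Suc n)) \<le> q * norm (d n) + C"
    and q: "0 \<le> q" "q < 1"
  shows "Bseq d"
proof -
  obtain N where N: "\<And>n. n \<ge> N \<Longrightarrow> norm (d (Suc n)) \<le> q * norm (d n) + C"
    using rec by (auto simp: eventually_sequentially)
  define K where "K = max (norm (d N)) (C / (1 - q))"
  have "norm (d (k + N)) \<le> K" for k
  proof (induction k)
    case (Suc k)
    have "norm (d (Suc k + N)) \<le> q * norm (d (k + N)) + C"
      using N[of "k + N"] by simp
    also have "\<dots> \<le> q * K + C"
      using Suc q by (simp add: mult_left_mono)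
    also have "\<dots> \<le> K"
    proof -
      have "C / (1 - q) \<le> K"
        by (simp add: K_def)
      then have "C \<le> (1 - q) * K"
        using q by (simp add: pos_divide_le_eq mult.commute)
      then show ?thesis
        by (simp add: algebra_simps)
    qed
    finally show ?case .
  qed (simp add: K_def)
  then have "Bseq (\<lambda>k. d (k + N))"
    by (rule BseqI')
  then show ?thesis
    by (rule Bseq_offset)
qed

lemma summable_if_telescoping_bound:
  fixes b c :: "nat \<Rightarrow> real"
  assumes tele: "\<And>n. e * c n \<le> b n - b (Suc n)" and b: "\<And>n. 0 \<le> b n"
    and e: "e > 0" and c: "\<And>n. 0 \<le> c n"
  shows "summable c"
proof (rule summableI_nonneg_bounded)
  fix k
  have "e * (\<Sum>j<k. c j) \<le> (\<Sum>j<k. b j - b (Suc j))"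
    unfolding sum_distrib_left by (intro sum_mono tele)
  also have "\<dots> = b 0 - b k"
    by (rule sum_lessThan_telescope')
  also have "\<dots> \<le> b 0"
    using b by simp
  finally show "(\<Sum>j<k. c j) \<le> b 0 / e"
    using e by (simp add: field_simps)
qed (rule c)

lemma contraction_divergent_LIMSEQ_zero:
  fixes b c :: "nat \<Rightarrow> real"
  assumes b: "\<And>n. 0 \<le> b n" and c: "\<And>n. 0 \<le> c n"
    and rec: "\<And>n. b (Suc n) \<le> (1 - c n) * b n" and ns: "\<not> summable c"
  shows "b \<longlonglongrightarrow> 0"
proof -
  have "decseq b"
  proof (rule decseq_SucI)
    fix n
    show "b (Suc n) \<le> b n"
      using rec[of n] mult_nonneg_nonneg[OF c b, of n n] by (simp add: algebra_simps)
  qed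
  then obtain L where L: "b \<longlonglongrightarrow> L" "\<And>n. L \<le> b n"
    using decseq_convergent[of b 0] b by blast
  have "L \<le> 0"
  proof (rule ccontr)
    assume "\<not> L \<le> 0"
    \<comment> \<open>a positive limit would make each step remove at least L c n\<close>
    have "L * c n \<le> b n - b (Suc n)" for n
      using rec[of n] mult_right_mono[OF L(2)[of n] c[of n]] by (simp add: algebra_simps)
    then have "summable c"
      by (rule summable_if_telescoping_bound) (use b c \<open>\<not> L \<le> 0\<close> in auto)
    with ns show False ..
  qed
  moreover have "0 \<le> L"
    using L(1) b by (intro LIMSEQ_le_const) auto
  ultimately show ?thesis
    using L(1) by simp
qed

lemma excess_contraction:
  fixes a a' c r e :: real
  assumes "a' \<le> (1 - c) * a + r" "r \<le> e * c" "0 \<le> c" "c \<le> 1"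
  shows "max (a' - e) 0 \<le> (1 - c) * max (a - e) 0"
proof -
  have "a' - e \<le> (1 - c) * (a - e)"
    using assms(1,2) by (simp add: algebra_simps)
  also have "\<dots> \<le> (1 - c) * max (a - e) 0"
    using assms(4) by (intro mult_left_mono) auto
  finally show ?thesis
    using assms(3,4) by simp
qed

lemma recursive_ineq_LIMSEQ_zero:
  fixes a c r :: "nat \<Rightarrow> real"
  assumes a: "\<And>n. 0 \<le> a n"
    and c: "\<And>n. n \<ge> N \<Longrightarrow> 0 < c n" "\<And>n. n \<ge> N \<Longrightarrow> c n \<le> 1"
    and rec: "\<And>n. n \<ge> N \<Longrightarrow> a (Suc n) \<le> (1 - c n) * a n + r n"
    and ns: "\<not> summable c" and rc: "(\<lambda>n. r n / c n) \<longlonglongrightarrow> 0"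
  shows "a \<longlonglongrightarrow> 0"
unfolding tendsto_iff
proof (intro allI impI)
  fix \<epsilon> :: real assume "\<epsilon> > 0"
  define e where "e = \<epsilon> / 2"
  have e: "e > 0"
    using \<open>\<epsilon> > 0\<close> by (simp add: e_def)
  obtain N1 where N1: "\<And>n. n \<ge> N1 \<Longrightarrow> r n / c n < e"
    using order_tendstoD(2)[OF rc e] by (auto simp: eventually_sequentially)
  define N' where "N' = max N N1"
  \<comment> \<open>above the level e the error r n is absorbed by the contraction\<close>
  have "(\<lambda>n. max (a (n + N') - e) 0) \<longlonglongrightarrow> 0"
  proof (rule contraction_divergent_LIMSEQ_zero[where c = "\<lambda>n. c (n + N')"])
    fix n
    have late: "N \<le> n + N'" "N1 \<le> n + N'"
      by (auto simp: N'_def)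
    have cn: "0 < c (n + N')" "c (n + N') \<le> 1"
      using c late by auto
    then show "0 \<le> max (a (n + N') - e) 0" "0 \<le> c (n + N')"
      by auto
    have "r (n + N') \<le> e * c (n + N')"
      using N1[OF late(2)] cn by (simp add: divide_less_eq)
    then show "max (a (Suc n + N') - e) 0 \<le> (1 - c (n + N')) * max (a (n + N') - e) 0"
      using rec[OF late(1)] cn by (intro excess_contraction) auto
  next
    show "\<not> summable (\<lambda>n. c (n + N'))"
      using ns by simp
  qed
  then have "\<forall>\<^sub>F n in sequentially. max (a n - e) 0 < e"
    using e by (intro order_tendstoD(2)[OF LIMSEQ_offset])
  then have "\<forall>\<^sub>F n in sequentially. a n - e < e"
    by eventually_elim (simp add: max_less_iff_conj)
  then show "\<forall>\<^sub>F n in sequentially. dist (a n) 0 < \<epsilon>"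
    by eventually_elim (use a in \<open>simp add: e_def dist_real_def\<close>)
qed

section \<open>Step sizes\<close>

locale step_sizes =
  fixes \<theta> lam \<beta> \<alpha> :: "nat \<Rightarrow> real"
  assumes theta_nonneg: "\<And>n. n \<ge> 1 \<Longrightarrow> 0 \<le> \<theta> n"
    and theta_dec: "\<And>n. n \<ge> 1 \<Longrightarrow> \<theta> (Suc n) \<le> \<theta> n"
    and lam_pos: "\<And>n. n \<ge> 1 \<Longrightarrow> 0 < lam n"
    and beta_nonneg: "\<And>n. n \<ge> 1 \<Longrightarrow> 0 \<le> \<beta> n"
    and beta_dec: "\<And>n. n \<ge> 1 \<Longrightarrow> \<beta> (Suc n) \<le> \<beta> n"
    and alpha_pos: "\<And>n. n \<ge> 1 \<Longrightarrow> 0 < \<alpha> n"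
    and alpha_le_1: "\<And>n. n \<ge> 1 \<Longrightarrow> \<alpha> n \<le> 1"
    and theta_lim: "\<theta> \<longlonglongrightarrow> 0" and lam_lim: "lam \<longlonglongrightarrow> 0"
    and beta_lim: "\<beta> \<longlonglongrightarrow> 0" and alpha_lim: "\<alpha> \<longlonglongrightarrow> 0"
    and C1: "\<not> summable \<alpha>"
    and C2: "(\<lambda>n. (1 / \<alpha> (Suc n)) * \<bar>1 / lam (Suc n) - 1 / lam n\<bar>) \<longlonglongrightarrow> 0"
    and C3: "(\<lambda>n. (1 / lam (Suc n)) * \<bar>1 - \<alpha> n / \<alpha> (Suc n)\<bar>) \<longlonglongrightarrow> 0"
    and C5: "(\<lambda>n. \<theta> n / (\<alpha> (Suc n) * lam (Suc n))) \<longlonglongrightarrow> 0"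
    and C7: "(\<lambda>n. \<beta> n / \<alpha> (Suc n)) \<longlonglongrightarrow> 0"
begin

lemma alpha_diff_ratio: "(\<lambda>n. \<bar>\<alpha> (Suc n) - \<alpha> n\<bar> / \<alpha> (Suc n)) \<longlonglongrightarrow> 0"
proof -
  have "(\<lambda>n. (1 / lam (Suc n)) * \<bar>1 - \<alpha> n / \<alpha> (Suc n)\<bar> * lam (Suc n)) \<longlonglongrightarrow> 0"
    using tendsto_mult[OF C3 LIMSEQ_Suc[OF lam_lim]] by simp
  moreover have "(1 / lam (Suc n)) * \<bar>1 - \<alpha> n / \<alpha> (Suc n)\<bar> * lam (Suc n)
      = \<bar>\<alpha> (Suc n) - \<alpha> n\<bar> / \<alpha> (Suc n)" for n
  proof -
    have "\<alpha> (Suc n) > 0" "lam (Suc n) > 0"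
      using alpha_pos lam_pos by auto
    moreover have "1 - \<alpha> n / \<alpha> (Suc n) = (\<alpha> (Suc n) - \<alpha> n) / \<alpha> (Suc n)"
      using \<open>\<alpha> (Suc n) > 0\<close> by (simp add: field_simps)
    ultimately show ?thesis
      by simp
  qed
  ultimately show ?thesis
    by simp
qed

lemma theta_ratio: "(\<lambda>n. \<theta> n / \<alpha> (Suc n)) \<longlonglongrightarrow> 0"
proof -
  have "(\<lambda>n. \<theta> n / (\<alpha> (Suc n) * lam (Suc n)) * lam (Suc n)) \<longlonglongrightarrow> 0"
    using tendsto_mult[OF C5 LIMSEQ_Suc[OF lam_lim]] by simp
  moreover have "\<theta> n / (\<alpha> (Suc n) * lam (Suc n)) * lam (Suc n) = \<theta> n / \<alpha> (Suc n)" for n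
    using lam_pos[of "Suc n"] by simp
  ultimately show ?thesis
    by simp
qed

lemma lam_diff_ratio: "(\<lambda>n. \<bar>lam n - lam (Suc n)\<bar> / \<alpha> (Suc n)) \<longlonglongrightarrow> 0"
proof -
  have "(\<lambda>n. (1 / \<alpha> (Suc n)) * \<bar>1 / lam (Suc n) - 1 / lam n\<bar> * (lam n * lam (Suc n))) \<longlonglongrightarrow> 0"
    using tendsto_mult[OF C2 tendsto_mult[OF lam_lim LIMSEQ_Suc[OF lam_lim]]] by simp
  moreover have "(1 / \<alpha> (Suc n)) * \<bar>1 / lam (Suc n) - 1 / lam n\<bar> * (lam n * lam (Suc n))
      = \<bar>lam n - lam (Suc n)\<bar> / \<alpha> (Suc n)" if "n \<ge> 1" for n
  proof -
    have pos: "lam n > 0" "lam (Suc n) > 0"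
      using lam_pos that by auto
    then have "\<bar>1 / lam (Suc n) - 1 / lam n\<bar> * (lam n * lam (Suc n))
        = \<bar>(1 / lam (Suc n) - 1 / lam n) * (lam n * lam (Suc n))\<bar>"
      by (simp add: abs_mult)
    also have "(1 / lam (Suc n) - 1 / lam n) * (lam n * lam (Suc n)) = lam n - lam (Suc n)"
      using pos by (simp add: field_simps)
    finally show ?thesis
      by simp
  qed
  then have "\<forall>\<^sub>F n in sequentially. (1 / \<alpha> (Suc n)) * \<bar>1 / lam (Suc n) - 1 / lam n\<bar> * (lam n * lam (Suc n))
      = \<bar>lam n - lam (Suc n)\<bar> / \<alpha> (Suc n)"
    unfolding eventually_sequentially by blast
  ultimately show ?thesis
    by (rule Lim_transform_eventually)
qed

lemma lam_quot_ratio: "(\<lambda>n. \<bar>lam (Suc n) / lam n - 1\<bar> / \<alpha> (Suc n)) \<longlonglongrightarrow> 0"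
proof -
  have "(\<lambda>n. (1 / \<alpha> (Suc n)) * \<bar>1 / lam (Suc n) - 1 / lam n\<bar> * lam (Suc n)) \<longlonglongrightarrow> 0"
    using tendsto_mult[OF C2 LIMSEQ_Suc[OF lam_lim]] by simp
  moreover have "(1 / \<alpha> (Suc n)) * \<bar>1 / lam (Suc n) - 1 / lam n\<bar> * lam (Suc n)
      = \<bar>lam (Suc n) / lam n - 1\<bar> / \<alpha> (Suc n)" if "n \<ge> 1" for n
  proof -
    have pos: "lam n > 0" "lam (Suc n) > 0"
      using lam_pos that by auto
    then have "\<bar>1 / lam (Suc n) - 1 / lam n\<bar> * lam (Suc n) = \<bar>(1 / lam (Suc n) - 1 / lam n) * lam (Suc n)\<bar>"
      by (simp add: abs_mult)
    also have "(1 / lam (Suc n) - 1 / lam n) * lam (Suc n) = - (lam (Suc n) / lam n - 1)"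
      using pos by (simp add: field_simps)
    finally have "\<bar>1 / lam (Suc n) - 1 / lam n\<bar> * lam (Suc n) = \<bar>lam (Suc n) / lam n - 1\<bar>"
      by (simp only: abs_minus_cancel)
    then show ?thesis
      unfolding mult.assoc by simp
  qed
  then have "\<forall>\<^sub>F n in sequentially. (1 / \<alpha> (Suc n)) * \<bar>1 / lam (Suc n) - 1 / lam n\<bar> * lam (Suc n)
      = \<bar>lam (Suc n) / lam n - 1\<bar> / \<alpha> (Suc n)"
    unfolding eventually_sequentially by blast
  ultimately show ?thesis
    by (rule Lim_transform_eventually)
qed

end

section \<open>One stage of a sweep\<close>

(* Stage i of a sweep: w, z, d, y, w' stand for w^(i), z^(i), d^(i), y^(i), w^(i+1), and g is the
   gradient of h. The recursions hold from n = 1 on; the values at n = 0 are initial data. *)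

locale incremental_stage = step_sizes \<theta> lam \<beta> \<alpha>
  for \<theta> lam \<beta> \<alpha> :: "nat \<Rightarrow> real" +
  fixes f h :: "'a::{real_inner, complete_space} \<Rightarrow> real"
    and g T :: "'a \<Rightarrow> 'a" and L :: real and u :: 'a
    and w z d y w' :: "nat \<Rightarrow> 'a"
  assumes f_cont: "continuous_on UNIV f" and f_convex: "convex_on UNIV f"
    and h_convex: "convex_on UNIV h"
    and h_grad: "\<And>p. (h has_derivative (\<lambda>v. inner (g p) v)) (at p)"
    and L_pos: "L > 0"
    and g_lipschitz: "\<And>p q. norm (g p - g q) \<le> (1 / L) * norm (p - q)"
    and lam_le: "\<And>n. n \<ge> 1 \<Longrightarrow> lam n \<le> 2 * L"
    and T_firm: "firmly_nonexpansive T"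
    and z_eq: "\<And>n. n \<ge> 1 \<Longrightarrow> z n = w n + \<theta> n *\<^sub>R (w n - w (n - 1))"
    and d_eq: "\<And>n. n \<ge> 1 \<Longrightarrow> d (Suc n) = - g (z n) + \<beta> n *\<^sub>R d n"
    and y_eq: "\<And>n. n \<ge> 1 \<Longrightarrow> y n = prox (lam n) f (z n + lam n *\<^sub>R d (Suc n))"
    and w'_eq: "\<And>n. n \<ge> 1 \<Longrightarrow> w' n = \<alpha> n *\<^sub>R u + (1 - \<alpha> n) *\<^sub>R T (y n)"
    and y_bounded: "bounded (y ` {1..})"
begin

abbreviation prox_arg :: "nat \<Rightarrow> 'a" where
  "prox_arg n \<equiv> z n + lam n *\<^sub>R d (Suc n)"

lemma T_nonexpansive: "norm (T a - T b) \<le> norm (a - b)"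
  using firmly_nonexpansive_imp_nonexpansive[OF T_firm] .

lemma Bseq_y: "Bseq y"
proof -
  have "range y \<subseteq> insert (y 0) (y ` {1..})"
    by (auto simp: image_iff) (metis atLeast_iff le_simps(3) Suc_le_eq neq0_conv)
  then show ?thesis
    unfolding Bseq_eq_bounded using y_bounded by (meson bounded_insert bounded_subset)
qed

lemma Bseq_T_y: "Bseq (\<lambda>n. T (y n))"
proof -
  obtain K where K: "\<forall>n. norm (y n) \<le> K"
    using Bseq_y by (rule BseqE)
  have "norm (T (y n)) \<le> K + norm (T 0)" for n
    using T_nonexpansive[of "y n" 0] norm_triangle_ineq2[of "T (y n)" "T 0"] spec[OF K, of n]
    by simp
  then show ?thesis
    by (rule BseqI')
qed

lemma w'_minus_T_y: "(\<lambda>n. w' n - T (y n)) \<longlonglongrightarrow> 0"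
proof -
  have "Bseq (\<lambda>n. u - T (y n))"
    using Bseq_diff_seq[OF _ Bseq_T_y] by simp
  then obtain K where K: "\<forall>n. norm (u - T (y n)) \<le> K"
    by (rule BseqE)
  have "(\<lambda>n. \<alpha> n *\<^sub>R (u - T (y n))) \<longlonglongrightarrow> 0"
    using K by (intro lim_null_scaleR_bounded[OF alpha_lim, where B = K]) auto
  moreover have "\<forall>\<^sub>F n in sequentially. \<alpha> n *\<^sub>R (u - T (y n)) = w' n - T (y n)"
    unfolding eventually_sequentially
    by (intro exI[of _ 1] allI impI) (simp add: w'_eq algebra_simps)
  ultimately show ?thesis
    by (rule Lim_transform_eventually)
qed

lemma Bseq_w': "Bseq w'"
  using Bseq_T_y w'_minus_T_y by (rule Bseq_if_tendsto_diff)

lemma w'_step: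
  assumes "n \<ge> 1"
  shows "norm (w' (Suc n) - w' n)
    \<le> \<bar>\<alpha> (Suc n) - \<alpha> n\<bar> * norm (u - T (y n)) + (1 - \<alpha> (Suc n)) * norm (y (Suc n) - y n)"
proof -
  have "w' (Suc n) - w' n
      = (\<alpha> (Suc n) - \<alpha> n) *\<^sub>R (u - T (y n)) + (1 - \<alpha> (Suc n)) *\<^sub>R (T (y (Suc n)) - T (y n))"
    using assms by (simp add: w'_eq algebra_simps)
  then have "norm (w' (Suc n) - w' n)
      \<le> \<bar>\<alpha> (Suc n) - \<alpha> n\<bar> * norm (u - T (y n)) + (1 - \<alpha> (Suc n)) * norm (T (y (Suc n)) - T (y n))"
    using alpha_le_1[of "Suc n"] norm_triangle_ineq by (simp add: norm_triangle_le)
  also have "\<dots> \<le> \<bar>\<alpha> (Suc n) - \<alpha> n\<bar> * norm (u - T (y n)) + (1 - \<alpha> (Suc n)) * norm (y (Suc n) - y n)"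
    using alpha_le_1[of "Suc n"] T_nonexpansive by (simp add: mult_left_mono)
  finally show ?thesis .
qed

lemma y_step:
  assumes "n \<ge> 1"
  shows "norm (y (Suc n) - y n)
    \<le> norm (prox_arg (Suc n) - prox_arg n) + \<bar>lam (Suc n) / lam n - 1\<bar> * norm (prox_arg n - y n)"
  using prox_perturbation[OF f_cont f_convex lam_pos[of "Suc n"] lam_pos[OF assms]] assms
  by (simp add: y_eq)

lemma prox_arg_step:
  assumes n: "n \<ge> 1"
  shows "norm (prox_arg (Suc n) - prox_arg n)
    \<le> norm (z (Suc n) - z n) + \<bar>lam n - lam (Suc n)\<bar> * norm (g (z n))
      + norm ((lam (Suc n) * \<beta> (Suc n)) *\<^sub>R d (Suc n) - (lam n * \<beta> n) *\<^sub>R d n)"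
proof -
  let ?G = "\<lambda>p. p - lam (Suc n) *\<^sub>R g p"
  have "prox_arg (Suc n) - prox_arg n = (?G (z (Suc n)) - ?G (z n)) + (lam n - lam (Suc n)) *\<^sub>R g (z n)
      + ((lam (Suc n) * \<beta> (Suc n)) *\<^sub>R d (Suc n) - (lam n * \<beta> n) *\<^sub>R d n)"
    using n by (simp add: d_eq algebra_simps)
  moreover have "norm (?G (z (Suc n)) - ?G (z n)) \<le> norm (z (Suc n) - z n)"
    using lam_pos[of "Suc n"] lam_le[of "Suc n"]
    by (intro gradient_step_nonexpansive[OF h_convex h_grad L_pos g_lipschitz]) auto
  ultimately show ?thesis
    by (smt (verit) norm_scaleR norm_triangle_ineq)
qed

(* The part of w' (n + 1) - w' n not controlled by the contraction of w (n + 1) - w n;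
   each summand is o(alpha (n + 1)) by (C2), (C3), (C5) and (C7). *)

definition drift :: "nat \<Rightarrow> real" where
  "drift n = \<bar>\<alpha> (Suc n) - \<alpha> n\<bar> * norm (u - T (y n))
    + \<bar>lam (Suc n) / lam n - 1\<bar> * norm (prox_arg n - y n)
    + \<bar>lam n - lam (Suc n)\<bar> * norm (g (z n))
    + norm ((lam (Suc n) * \<beta> (Suc n)) *\<^sub>R d (Suc n) - (lam n * \<beta> n) *\<^sub>R d n)
    + norm (z (Suc n) - w (Suc n)) + norm (z n - w n)"

lemma w'_step_drift:
  assumes n: "n \<ge> 1"
  shows "norm (w' (Suc n) - w' n) \<le> (1 - \<alpha> (Suc n)) * norm (w (Suc n) - w n) + drift n"
proof -
  define R where "R = drift n - \<bar>\<alpha> (Suc n) - \<alpha> n\<bar> * norm (u - T (y n))"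
  have R: "0 \<le> R"
    by (simp add: R_def drift_def)
  have "norm (z (Suc n) - z n) \<le> norm (w (Suc n) - w n) + norm (z (Suc n) - w (Suc n)) + norm (z n - w n)"
    using norm_triangle_ineq4[of "z (Suc n) - w (Suc n)" "z n - w n"]
      norm_triangle_ineq[of "w (Suc n) - w n" "(z (Suc n) - w (Suc n)) - (z n - w n)"]
    by (simp add: algebra_simps)
  then have "norm (y (Suc n) - y n) \<le> norm (w (Suc n) - w n) + R"
    using y_step[OF n] prox_arg_step[OF n] by (simp add: R_def drift_def)
  then have "(1 - \<alpha> (Suc n)) * norm (y (Suc n) - y n) \<le> (1 - \<alpha> (Suc n)) * (norm (w (Suc n) - w n) + R)"
    using alpha_le_1[of "Suc n"] by (simp add: mult_left_mono)
  also have "\<dots> \<le> (1 - \<alpha> (Suc n)) * norm (w (Suc n) - w n) + R"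
    using alpha_pos[of "Suc n"] alpha_le_1[of "Suc n"] R
    by (simp add: distrib_left mult_left_le_one_le)
  finally have "(1 - \<alpha> (Suc n)) * norm (y (Suc n) - y n) \<le> (1 - \<alpha> (Suc n)) * norm (w (Suc n) - w n) + R" .
  then show ?thesis
    using w'_step[OF n] by (simp add: R_def)
qed

lemma drift_le:
  assumes n: "n \<ge> 1"
  shows "drift n \<le> \<bar>\<alpha> (Suc n) - \<alpha> n\<bar> * norm (u - T (y n))
    + \<bar>lam (Suc n) / lam n - 1\<bar> * norm (prox_arg n - y n)
    + \<bar>lam n - lam (Suc n)\<bar> * norm (g (z n))
    + \<beta> n * norm (lam (Suc n) *\<^sub>R d (Suc n)) + \<beta> n * norm (lam n *\<^sub>R d n)
    + \<theta> n * norm (w (Suc n) - w n) + \<theta> n * norm (w n - w (n - 1))"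
proof -
  have "norm ((lam (Suc n) * \<beta> (Suc n)) *\<^sub>R d (Suc n) - (lam n * \<beta> n) *\<^sub>R d n)
      \<le> \<beta> n * norm (lam (Suc n) *\<^sub>R d (Suc n)) + \<beta> n * norm (lam n *\<^sub>R d n)"
  proof -
    have le: "\<beta> (Suc n) * (lam (Suc n) * norm (d (Suc n))) \<le> \<beta> n * (lam (Suc n) * norm (d (Suc n)))"
      using lam_pos[of "Suc n"] by (intro mult_right_mono[OF beta_dec[OF n]]) simp
    show ?thesis
      using norm_triangle_ineq4[of "(lam (Suc n) * \<beta> (Suc n)) *\<^sub>R d (Suc n)" "(lam n * \<beta> n) *\<^sub>R d n"]
        beta_nonneg[of "Suc n"] beta_nonneg[OF n] lam_pos[of "Suc n"] lam_pos[OF n]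
      by (simp add: abs_mult mult_ac) (use le in linarith)
  qed
  moreover have "norm (z (Suc n) - w (Suc n)) \<le> \<theta> n * norm (w (Suc n) - w n)"
    using z_eq[of "Suc n"] theta_nonneg[of "Suc n"] mult_right_mono[OF theta_dec[OF n]] by simp
  moreover have "norm (z n - w n) = \<theta> n * norm (w n - w (n - 1))"
    using z_eq[OF n] theta_nonneg[OF n] by simp
  ultimately show ?thesis
    unfolding drift_def by linarith
qed

lemma fejer_step:
  assumes p: "T p = p" and n: "n \<ge> 1"
  shows "(norm (w' n - p))\<^sup>2
    \<le> (norm (w n - p))\<^sup>2 - (norm (z n - y n))\<^sup>2 - (norm (T (y n) - y n))\<^sup>2
      + sq_perturbation (z n - p) (w n - p) + sq_perturbation (prox_arg n - p) (z n - p)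
      + sq_perturbation (z n - y n) (prox_arg n - y n) + sq_perturbation (w' n - p) (T (y n) - p)
      + 2 * lam n * (f p - f (y n))"
proof -
  have "(norm (T (y n) - p))\<^sup>2 \<le> (norm (prox_arg n - p))\<^sup>2 - (norm (prox_arg n - y n))\<^sup>2
      - (norm (T (y n) - y n))\<^sup>2 + 2 * lam n * (f p - f (y n))"
    using prox_firmly_nonexpansive_fejer[OF f_cont f_convex lam_pos[OF n] T_firm p, of "prox_arg n"] n
    by (simp add: y_eq)
  then show ?thesis
    using norm_sq_le_perturbed[of "w' n - p" "T (y n) - p"] norm_sq_le_perturbed[of "prox_arg n - p" "z n - p"]
      norm_sq_le_perturbed[of "z n - p" "w n - p"] norm_sq_le_perturbed[of "z n - y n" "prox_arg n - y n"]
    by linarith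
qed

context
  assumes w_bounded: "Bseq w"
begin

lemma z_minus_w: "(\<lambda>n. z n - w n) \<longlonglongrightarrow> 0"
proof -
  have "Bseq (\<lambda>n. w n - w (n - 1))"
    using Bseq_diff_seq[OF w_bounded Bseq_subseq[OF w_bounded]] .
  then obtain K where K: "\<forall>n. norm (w n - w (n - 1)) \<le> K"
    by (rule BseqE)
  have "(\<lambda>n. \<theta> n *\<^sub>R (w n - w (n - 1))) \<longlonglongrightarrow> 0"
    using K by (intro lim_null_scaleR_bounded[OF theta_lim, where B = K]) auto
  moreover have "\<forall>\<^sub>F n in sequentially. \<theta> n *\<^sub>R (w n - w (n - 1)) = z n - w n"
    unfolding eventually_sequentially by (intro exI[of _ 1] allI impI) (simp add: z_eq)
  ultimately show ?thesis
    by (rule Lim_transform_eventually)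
qed

lemma Bseq_z: "Bseq z"
  using w_bounded z_minus_w by (rule Bseq_if_tendsto_diff)

lemma Bseq_g_z: "Bseq (\<lambda>n. g (z n))"
proof -
  obtain K where K: "\<forall>n. norm (z n) \<le> K"
    using Bseq_z by (rule BseqE)
  have "norm (g (z n)) \<le> norm (g 0) + (1 / L) * K" for n
  proof -
    have "norm (g (z n)) \<le> norm (g 0) + (1 / L) * norm (z n)"
      using g_lipschitz[of "z n" 0] norm_triangle_ineq2[of "g (z n)" "g 0"] by simp
    also have "\<dots> \<le> norm (g 0) + (1 / L) * K"
      using K L_pos by (simp add: divide_right_mono)
    finally show ?thesis .
  qed
  then show ?thesis
    by (rule BseqI')
qed

lemma Bseq_d: "Bseq d"
proof -
  obtain G where G: "\<forall>n. norm (g (z n)) \<le> G"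
    using Bseq_g_z by (rule BseqE)
  have "\<forall>\<^sub>F n in sequentially. \<beta> n < 1 / 2"
    using order_tendstoD(2)[OF beta_lim, of "1 / 2"] by simp
  then have "\<forall>\<^sub>F n in sequentially. norm (d (Suc n)) \<le> 1 / 2 * norm (d n) + G"
    using eventually_ge_at_top[of 1]
  proof eventually_elim
    case (elim n)
    have "norm (d (Suc n)) \<le> norm (g (z n)) + \<beta> n * norm (d n)"
      using elim norm_triangle_ineq[of "- g (z n)" "\<beta> n *\<^sub>R d n"] beta_nonneg[of n] by (simp add: d_eq)
    also have "\<dots> \<le> G + 1 / 2 * norm (d n)"
      using G elim by (intro add_mono mult_right_mono) (auto intro: less_imp_le)
    finally show ?case
      by simp
  qed
  then show ?thesis
    by (rule Bseq_contractive_recursion) auto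
qed

lemma prox_arg_minus_z: "(\<lambda>n. prox_arg n - z n) \<longlonglongrightarrow> 0"
proof -
  obtain K where K: "\<forall>n. norm (d n) \<le> K"
    using Bseq_d by (rule BseqE)
  show ?thesis
    using K by (simp add: lim_null_scaleR_bounded[OF lam_lim, where B = K])
qed

lemma Bseq_prox_arg: "Bseq prox_arg"
  using Bseq_z prox_arg_minus_z by (rule Bseq_if_tendsto_diff)

lemma drift_ratio: "(\<lambda>n. drift n / \<alpha> (Suc n)) \<longlonglongrightarrow> 0"
proof (rule Lim_null_comparison)
  define B where "B n = \<bar>\<alpha> (Suc n) - \<alpha> n\<bar> / \<alpha> (Suc n) * norm (u - T (y n))
    + \<bar>lam (Suc n) / lam n - 1\<bar> / \<alpha> (Suc n) * norm (prox_arg n - y n)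
    + \<bar>lam n - lam (Suc n)\<bar> / \<alpha> (Suc n) * norm (g (z n))
    + \<beta> n / \<alpha> (Suc n) * norm (lam (Suc n) *\<^sub>R d (Suc n))
    + \<beta> n / \<alpha> (Suc n) * norm (lam n *\<^sub>R d n)
    + \<theta> n / \<alpha> (Suc n) * norm (w (Suc n) - w n)
    + \<theta> n / \<alpha> (Suc n) * norm (w n - w (n - 1))" for n
  have Bseq_lam_d: "Bseq (\<lambda>n. lam n *\<^sub>R d n)"
    using Bseq_scaleR_seq[OF convergent_imp_Bseq[OF convergentI[OF lam_lim]] Bseq_d] .
  have "(\<lambda>n. \<bar>\<alpha> (Suc n) - \<alpha> n\<bar> / \<alpha> (Suc n) * norm (u - T (y n))) \<longlonglongrightarrow> 0"
    using alpha_diff_ratio Bseq_diff_seq[OF _ Bseq_T_y] by (rule tendsto_zero_mult_Bseq) simp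
  moreover have "(\<lambda>n. \<bar>lam (Suc n) / lam n - 1\<bar> / \<alpha> (Suc n) * norm (prox_arg n - y n)) \<longlonglongrightarrow> 0"
    using lam_quot_ratio Bseq_diff_seq[OF Bseq_prox_arg Bseq_y] by (rule tendsto_zero_mult_Bseq)
  moreover have "(\<lambda>n. \<bar>lam n - lam (Suc n)\<bar> / \<alpha> (Suc n) * norm (g (z n))) \<longlonglongrightarrow> 0"
    using lam_diff_ratio Bseq_g_z by (rule tendsto_zero_mult_Bseq)
  moreover have "(\<lambda>n. \<beta> n / \<alpha> (Suc n) * norm (lam (Suc n) *\<^sub>R d (Suc n))) \<longlonglongrightarrow> 0"
    using C7 Bseq_Suc_iff[THEN iffD2, OF Bseq_lam_d] by (rule tendsto_zero_mult_Bseq)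
  moreover have "(\<lambda>n. \<beta> n / \<alpha> (Suc n) * norm (lam n *\<^sub>R d n)) \<longlonglongrightarrow> 0"
    using C7 Bseq_lam_d by (rule tendsto_zero_mult_Bseq)
  moreover have "(\<lambda>n. \<theta> n / \<alpha> (Suc n) * norm (w (Suc n) - w n)) \<longlonglongrightarrow> 0"
    using theta_ratio Bseq_diff_seq[OF Bseq_subseq[OF w_bounded] w_bounded] by (rule tendsto_zero_mult_Bseq)
  moreover have "(\<lambda>n. \<theta> n / \<alpha> (Suc n) * norm (w n - w (n - 1))) \<longlonglongrightarrow> 0"
    using theta_ratio Bseq_diff_seq[OF w_bounded Bseq_subseq[OF w_bounded]] by (rule tendsto_zero_mult_Bseq)
  ultimately show "B \<longlonglongrightarrow> 0"
    unfolding B_def by (intro tendsto_add_zero)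
  show "\<forall>\<^sub>F n in sequentially. norm (drift n / \<alpha> (Suc n)) \<le> B n"
    unfolding eventually_sequentially
  proof (intro exI[of _ 1] allI impI)
    fix n :: nat assume n: "n \<ge> 1"
    have "drift n / \<alpha> (Suc n) \<le> B n"
      using drift_le[OF n] alpha_pos[of "Suc n"] unfolding B_def
      by (simp add: divide_right_mono add_divide_distrib[symmetric])
    moreover have "0 \<le> drift n"
      by (simp add: drift_def)
    ultimately show "norm (drift n / \<alpha> (Suc n)) \<le> B n"
      using alpha_pos[of "Suc n"] by simp
  qed
qed

lemma stage_regularity:
  obtains e where "(\<lambda>n. e n / \<alpha> (Suc n)) \<longlonglongrightarrow> 0"
    "\<And>n. n \<ge> 1 \<Longrightarrow> norm (w' (Suc n) - w' n) \<le> (1 - \<alpha> (Suc n)) * norm (w (Suc n) - w n) + e n"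
  using that[OF drift_ratio w'_step_drift] .

lemma fejer_step_asymptotic:
  assumes p: "T p = p"
  obtains \<epsilon> where "\<epsilon> \<longlonglongrightarrow> 0"
    "\<And>n. n \<ge> 1 \<Longrightarrow> (norm (w' n - p))\<^sup>2
      \<le> (norm (w n - p))\<^sup>2 - (norm (z n - y n))\<^sup>2 - (norm (T (y n) - y n))\<^sup>2 + \<epsilon> n"
proof -
  obtain a b where b: "0 \<le> b" and ab: "\<And>q. a - b * norm q \<le> f q"
    by (rule convex_continuous_affine_minorant[OF f_cont f_convex]) blast
  obtain K where K: "\<forall>n. norm (y n) \<le> K"
    using Bseq_y by (rule BseqE)
  \<comment> \<open>f need not be bounded above on bounded sets; only the lower bound enters\<close>
  define Bf where "Bf = f p - a + b * K"
  have Bf: "f p - f (y n) \<le> Bf" for n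
    using ab[of "y n"] mult_left_mono[OF spec[OF K, of n] b] by (simp add: Bf_def)
  define \<epsilon> where "\<epsilon> n = sq_perturbation (z n - p) (w n - p) + sq_perturbation (prox_arg n - p) (z n - p)
      + sq_perturbation (z n - y n) (prox_arg n - y n) + sq_perturbation (w' n - p) (T (y n) - p)
      + 2 * lam n * Bf" for n
  have const: "Bseq (\<lambda>_. p)"
    by simp
  have "(\<lambda>n. sq_perturbation (z n - p) (w n - p)) \<longlonglongrightarrow> 0"
    using z_minus_w Bseq_diff_seq[OF w_bounded const] by (intro sq_perturbation_tendsto_zero) simp_all
  moreover have "(\<lambda>n. sq_perturbation (prox_arg n - p) (z n - p)) \<longlonglongrightarrow> 0"
    using prox_arg_minus_z Bseq_diff_seq[OF Bseq_z const] by (intro sq_perturbation_tendsto_zero) simp_all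
  moreover have "(\<lambda>n. sq_perturbation (z n - y n) (prox_arg n - y n)) \<longlonglongrightarrow> 0"
    using tendsto_minus[OF prox_arg_minus_z] Bseq_diff_seq[OF Bseq_prox_arg Bseq_y]
    by (intro sq_perturbation_tendsto_zero) simp_all
  moreover have "(\<lambda>n. sq_perturbation (w' n - p) (T (y n) - p)) \<longlonglongrightarrow> 0"
    using w'_minus_T_y Bseq_diff_seq[OF Bseq_T_y const] by (intro sq_perturbation_tendsto_zero) simp_all
  moreover have "(\<lambda>n. 2 * lam n * Bf) \<longlonglongrightarrow> 0"
    using tendsto_mult[OF tendsto_mult[OF tendsto_const lam_lim] tendsto_const, of 2 Bf] by simp
  ultimately have "\<epsilon> \<longlonglongrightarrow> 0"
    unfolding \<epsilon>_def by (intro tendsto_add_zero)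
  moreover have "2 * lam n * (f p - f (y n)) \<le> 2 * lam n * Bf" if "n \<ge> 1" for n
    using lam_pos[OF that] Bf[of n] by simp
  ultimately show ?thesis
    using fejer_step[OF p] that unfolding \<epsilon>_def by fastforce
qed

end

end

section \<open>The whole algorithm\<close>

locale incremental_algorithm = step_sizes \<theta> lam \<beta> \<alpha>
  for \<theta> lam \<beta> \<alpha> :: "nat \<Rightarrow> real" +
  fixes M :: nat
    and f h :: "nat \<Rightarrow> 'a::{real_inner, complete_space} \<Rightarrow> real"
    and gh T :: "nat \<Rightarrow> 'a \<Rightarrow> 'a" and L :: "nat \<Rightarrow> real" and u :: "nat \<Rightarrow> 'a"
    and x :: "nat \<Rightarrow> 'a" and w z d y :: "nat \<Rightarrow> nat \<Rightarrow> 'a"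
  assumes M_pos: "M \<ge> 1"
    and stage: "\<And>i. i \<in> {1..M} \<Longrightarrow> incremental_stage \<theta> lam \<beta> \<alpha> (f i) (h i) (gh i) (T i) (L i) (u i)
      (w i) (z i) (d i) (y i) (w (Suc i))"
    and w_first: "\<And>n. n \<ge> 1 \<Longrightarrow> w 1 n = x n"
    and x_next: "\<And>n. n \<ge> 1 \<Longrightarrow> x (Suc n) = w (Suc M) n"
    and common_fixed_point: "\<exists>p. \<forall>i\<in>{1..M}. T i p = p"
begin

lemma w_first_eventually: "\<forall>\<^sub>F n in sequentially. w 1 n = x n"
  using eventually_ge_at_top[of 1] by (rule eventually_mono) (rule w_first)

lemma Bseq_x: "Bseq x"
proof -
  have "\<forall>\<^sub>F n in sequentially. norm (x (Suc n)) \<le> norm (w (Suc M) n)"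
    using eventually_ge_at_top[of 1] by eventually_elim (simp add: x_next)
  moreover have "Bseq (w (Suc M))"
    using M_pos by (intro incremental_stage.Bseq_w'[OF stage]) simp
  ultimately have "Bseq (\<lambda>n. x (Suc n))"
    by (rule Bseq_eventually_mono)
  then show ?thesis
    by (simp add: Bseq_Suc_iff)
qed

lemma Bseq_w:
  assumes "i \<in> {1..M}"
  shows "Bseq (w i)"
proof (cases "i = 1")
  case True
  from w_first_eventually have "\<forall>\<^sub>F n in sequentially. norm (w 1 n) \<le> norm (x n)"
    by eventually_elim simp
  then show ?thesis
    using Bseq_x True by (simp add: Bseq_eventually_mono)
next
  case False
  then obtain j where "i = Suc j" "j \<in> {1..M}"
    using assms by (cases i) auto
  then show ?thesis
    using incremental_stage.Bseq_w'[OF stage[of j]] by simp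
qed

lemma x_step_recursion:
  obtains E where "(\<lambda>n. E n / \<alpha> (Suc n)) \<longlonglongrightarrow> 0"
    "\<And>n. n \<ge> 1 \<Longrightarrow> norm (x (Suc (Suc n)) - x (Suc n)) \<le> (1 - \<alpha> (Suc n)) * norm (x (Suc n) - x n) + E n"
proof -
  have "\<forall>i\<in>{1..M}. \<exists>e. (\<lambda>n. e n / \<alpha> (Suc n)) \<longlonglongrightarrow> 0 \<and> (\<forall>n\<ge>1.
      norm (w (Suc i) (Suc n) - w (Suc i) n) \<le> (1 - \<alpha> (Suc n)) * norm (w i (Suc n) - w i n) + e n)"
    by (metis incremental_stage.stage_regularity[OF stage Bseq_w])
  then obtain e where e_ratio: "\<And>i. i \<in> {1..M} \<Longrightarrow> (\<lambda>n. e i n / \<alpha> (Suc n)) \<longlonglongrightarrow> 0"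
    and e_step: "\<And>i n. i \<in> {1..M} \<Longrightarrow> n \<ge> 1 \<Longrightarrow> norm (w (Suc i) (Suc n) - w (Suc i) n)
      \<le> (1 - \<alpha> (Suc n)) * norm (w i (Suc n) - w i n) + e i n"
    by metis
  \<comment> \<open>the contraction factor of the first stage survives the passage through the later ones\<close>
  have chain: "norm (w (Suc k) (Suc n) - w (Suc k) n) \<le> (1 - \<alpha> (Suc n)) * norm (x (Suc n) - x n) + (\<Sum>i=1..k. e i n)"
    if n: "n \<ge> 1" and k: "1 \<le> k" "k \<le> M" for k n
    using k
  proof (induction k rule: dec_induct)
    case base
    then show ?case
      using e_step[of 1 n] n M_pos w_first[OF n] w_first[of "Suc n"] by simp
  next
    case (step k)
    have "(1 - \<alpha> (Suc n)) * norm (w (Suc k) (Suc n) - w (Suc k) n) \<le> norm (w (Suc k) (Suc n) - w (Suc k) n)"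
      using alpha_pos[of "Suc n"] alpha_le_1[of "Suc n"] by (intro mult_left_le_one_le) auto
    then show ?case
      using step e_step[of "Suc k" n] n by simp
  qed
  show ?thesis
  proof (rule that)
    show "(\<lambda>n. (\<Sum>i=1..M. e i n) / \<alpha> (Suc n)) \<longlonglongrightarrow> 0"
      unfolding sum_divide_distrib by (intro tendsto_null_sum e_ratio)
    show "norm (x (Suc (Suc n)) - x (Suc n)) \<le> (1 - \<alpha> (Suc n)) * norm (x (Suc n) - x n) + (\<Sum>i=1..M. e i n)"
      if "n \<ge> 1" for n
      using chain[OF that M_pos order_refl] x_next[of "Suc n"] x_next[OF that] by simp
  qed
qed

lemma x_asymptotically_regular: "(\<lambda>n. x (Suc n) - x n) \<longlonglongrightarrow> 0"
proof -
  obtain E where E: "(\<lambda>n. E n / \<alpha> (Suc n)) \<longlonglongrightarrow> 0"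
    and rec: "\<And>n. n \<ge> 1 \<Longrightarrow> norm (x (Suc (Suc n)) - x (Suc n)) \<le> (1 - \<alpha> (Suc n)) * norm (x (Suc n) - x n) + E n"
    by (rule x_step_recursion) blast
  have "(\<lambda>n. norm (x (Suc n) - x n)) \<longlonglongrightarrow> 0"
  proof (rule recursive_ineq_LIMSEQ_zero[where c = "\<lambda>n. \<alpha> (Suc n)" and N = 1])
    show "\<not> summable (\<lambda>n. \<alpha> (Suc n))"
      using C1 summable_iff_shift[of \<alpha> 1] by simp
  qed (use alpha_pos alpha_le_1 rec E in auto)
  then show ?thesis
    by (simp add: tendsto_norm_zero_iff)
qed

lemma fejer_telescoped:
  assumes p: "\<forall>i\<in>{1..M}. T i p = p"
  obtains \<epsilon> where "\<epsilon> \<longlonglongrightarrow> 0"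
    "\<And>n. n \<ge> 1 \<Longrightarrow> (\<Sum>i=1..M. (norm (z i n - y i n))\<^sup>2 + (norm (T i (y i n) - y i n))\<^sup>2)
      \<le> (norm (x n - p))\<^sup>2 - (norm (x (Suc n) - p))\<^sup>2 + \<epsilon> n"
proof -
  have "\<forall>i\<in>{1..M}. \<exists>\<epsilon>. \<epsilon> \<longlonglongrightarrow> 0 \<and> (\<forall>n\<ge>1. (norm (w (Suc i) n - p))\<^sup>2
      \<le> (norm (w i n - p))\<^sup>2 - (norm (z i n - y i n))\<^sup>2 - (norm (T i (y i n) - y i n))\<^sup>2 + \<epsilon> n)"
    using p by (metis incremental_stage.fejer_step_asymptotic[OF stage Bseq_w])
  then obtain \<epsilon> where \<epsilon>_lim: "\<And>i. i \<in> {1..M} \<Longrightarrow> \<epsilon> i \<longlonglongrightarrow> 0"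
    and \<epsilon>_step: "\<And>i n. i \<in> {1..M} \<Longrightarrow> n \<ge> 1 \<Longrightarrow> (norm (w (Suc i) n - p))\<^sup>2
      \<le> (norm (w i n - p))\<^sup>2 - (norm (z i n - y i n))\<^sup>2 - (norm (T i (y i n) - y i n))\<^sup>2 + \<epsilon> i n"
    by metis
  show ?thesis
  proof (rule that)
    show "(\<lambda>n. \<Sum>i=1..M. \<epsilon> i n) \<longlonglongrightarrow> 0"
      by (intro tendsto_null_sum \<epsilon>_lim)
    fix n :: nat assume n: "n \<ge> 1"
    let ?A = "\<lambda>i. (norm (w i n - p))\<^sup>2"
    have "(\<Sum>i=1..M. (norm (z i n - y i n))\<^sup>2 + (norm (T i (y i n) - y i n))\<^sup>2)
        \<le> (\<Sum>i=1..M. ?A i - ?A (Suc i) + \<epsilon> i n)"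
      using \<epsilon>_step[OF _ n] by (intro sum_mono) fastforce
    also have "\<dots> = ?A 1 - ?A (Suc M) + (\<Sum>i=1..M. \<epsilon> i n)"
      using sum_Suc_diff[of 1 M "\<lambda>i. - ?A i"] M_pos by (simp add: sum.distrib)
    finally show "(\<Sum>i=1..M. (norm (z i n - y i n))\<^sup>2 + (norm (T i (y i n) - y i n))\<^sup>2)
        \<le> (norm (x n - p))\<^sup>2 - (norm (x (Suc n) - p))\<^sup>2 + (\<Sum>i=1..M. \<epsilon> i n)"
      using w_first[OF n] x_next[OF n] by simp
  qed
qed

lemma residuals_sq_bound:
  obtains \<rho> where "\<rho> \<longlonglongrightarrow> 0"
    "\<And>i n. i \<in> {1..M} \<Longrightarrow> n \<ge> 1 \<Longrightarrow> (norm (z i n - y i n))\<^sup>2 + (norm (T i (y i n) - y i n))\<^sup>2 \<le> \<rho> n"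
proof -
  obtain p where p: "\<forall>i\<in>{1..M}. T i p = p"
    using common_fixed_point ..
  obtain \<epsilon> where \<epsilon>: "\<epsilon> \<longlonglongrightarrow> 0"
    and tele: "\<And>n. n \<ge> 1 \<Longrightarrow> (\<Sum>i=1..M. (norm (z i n - y i n))\<^sup>2 + (norm (T i (y i n) - y i n))\<^sup>2)
      \<le> (norm (x n - p))\<^sup>2 - (norm (x (Suc n) - p))\<^sup>2 + \<epsilon> n"
    by (rule fejer_telescoped[OF p]) blast
  show ?thesis
  proof (rule that)
    have "(\<lambda>n. sq_perturbation (x n - p) (x (Suc n) - p)) \<longlonglongrightarrow> 0"
      using tendsto_minus[OF x_asymptotically_regular] Bseq_diff_seq[OF Bseq_subseq[OF Bseq_x, of Suc] Bfun_const]
      by (intro sq_perturbation_tendsto_zero) simp_all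
    then show "(\<lambda>n. sq_perturbation (x n - p) (x (Suc n) - p) + \<epsilon> n) \<longlonglongrightarrow> 0"
      using \<epsilon> by (rule tendsto_add_zero)
    fix i n :: nat assume i: "i \<in> {1..M}" and n: "n \<ge> 1"
    have "(norm (z i n - y i n))\<^sup>2 + (norm (T i (y i n) - y i n))\<^sup>2
        \<le> (\<Sum>i=1..M. (norm (z i n - y i n))\<^sup>2 + (norm (T i (y i n) - y i n))\<^sup>2)"
      using i by (intro member_le_sum) auto
    then show "(norm (z i n - y i n))\<^sup>2 + (norm (T i (y i n) - y i n))\<^sup>2
        \<le> sq_perturbation (x n - p) (x (Suc n) - p) + \<epsilon> n"
      using tele[OF n] norm_sq_le_perturbed[of "x n - p" "x (Suc n) - p"] by linarith
  qed
qed

lemma residuals_tendsto_zero: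
  assumes i: "i \<in> {1..M}"
  shows "(\<lambda>n. z i n - y i n) \<longlonglongrightarrow> 0" "(\<lambda>n. T i (y i n) - y i n) \<longlonglongrightarrow> 0"
proof -
  obtain \<rho> where \<rho>: "\<rho> \<longlonglongrightarrow> 0"
    and bound: "\<And>i n. i \<in> {1..M} \<Longrightarrow> n \<ge> 1
      \<Longrightarrow> (norm (z i n - y i n))\<^sup>2 + (norm (T i (y i n) - y i n))\<^sup>2 \<le> \<rho> n"
    by (rule residuals_sq_bound) blast
  note le = bound[OF i]
  have "\<forall>\<^sub>F n in sequentially. (norm (z i n - y i n))\<^sup>2 \<le> \<rho> n"
    using eventually_ge_at_top[of 1] by eventually_elim (use le zero_le_power2 in \<open>fastforce intro: order_trans[rotated]\<close>)
  then show "(\<lambda>n. z i n - y i n) \<longlonglongrightarrow> 0"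
    using \<rho> by (rule tendsto_zero_if_norm_sq_le)
  have "\<forall>\<^sub>F n in sequentially. (norm (T i (y i n) - y i n))\<^sup>2 \<le> \<rho> n"
    using eventually_ge_at_top[of 1] by eventually_elim (use le zero_le_power2 in \<open>fastforce intro: order_trans[rotated]\<close>)
  then show "(\<lambda>n. T i (y i n) - y i n) \<longlonglongrightarrow> 0"
    using \<rho> by (rule tendsto_zero_if_norm_sq_le)
qed

lemma x_minus_w:
  assumes "i \<in> {1..M}"
  shows "(\<lambda>n. x n - w i n) \<longlonglongrightarrow> 0"
proof -
  have "1 \<le> i" "i \<le> M"
    using assms by auto
  then show ?thesis
  proof (induction i rule: dec_induct)
    case base
    from w_first_eventually have "\<forall>\<^sub>F n in sequentially. 0 = x n - w 1 n"
      by eventually_elim simp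
    then show ?case
      by (rule Lim_transform_eventually[OF tendsto_const])
  next
    case (step j)
    then have j: "j \<in> {1..M}"
      by simp
    have "(\<lambda>n. (x n - w j n) - (z j n - w j n) + (z j n - y j n) - (T j (y j n) - y j n)
        - (w (Suc j) n - T j (y j n))) \<longlonglongrightarrow> 0 - 0 + 0 - 0 - 0"
      using step.IH step.prems residuals_tendsto_zero[OF j]
        incremental_stage.z_minus_w[OF stage[OF j] Bseq_w[OF j]] incremental_stage.w'_minus_T_y[OF stage[OF j]]
      by (intro tendsto_intros) auto
    then show ?case
      by simp
  qed
qed

lemma x_minus_z:
  assumes i: "i \<in> {1..M}"
  shows "(\<lambda>n. x n - z i n) \<longlonglongrightarrow> 0"
  using tendsto_diff[OF x_minus_w[OF i] incremental_stage.z_minus_w[OF stage[OF i] Bseq_w[OF i]]] by simp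

lemma T_x_minus_x:
  assumes i: "i \<in> {1..M}"
  shows "(\<lambda>n. T i (x n) - x n) \<longlonglongrightarrow> 0"
proof (rule Lim_null_comparison)
  have "(\<lambda>n. x n - y i n) \<longlonglongrightarrow> 0"
    using tendsto_add[OF x_minus_z[OF i] residuals_tendsto_zero(1)[OF i]] by simp
  then show "(\<lambda>n. 2 * norm (x n - y i n) + norm (T i (y i n) - y i n)) \<longlonglongrightarrow> 0"
    using residuals_tendsto_zero(2)[OF i] by (intro tendsto_add_zero tendsto_mult_right_zero tendsto_norm_zero)
  show "\<forall>\<^sub>F n in sequentially. norm (T i (x n) - x n) \<le> 2 * norm (x n - y i n) + norm (T i (y i n) - y i n)"
  proof (intro always_eventually allI)
    fix n
    have "norm (T i (x n) - x n) \<le> norm (T i (x n) - T i (y i n)) + norm (T i (y i n) - y i n) + norm (y i n - x n)"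
      using norm_triangle_ineq[of "T i (x n) - T i (y i n)" "T i (y i n) - y i n"]
        norm_triangle_ineq[of "T i (x n) - y i n" "y i n - x n"] by simp
    then show "norm (T i (x n) - x n) \<le> 2 * norm (x n - y i n) + norm (T i (y i n) - y i n)"
      using incremental_stage.T_nonexpansive[OF stage[OF i], of "x n" "y i n"] by (simp add: norm_minus_commute)
  qed
qed

end

theorem lemma4:
  fixes M :: nat
    and f h :: "nat \<Rightarrow> 'a::{real_inner, complete_space} \<Rightarrow> real"
    and gh :: "nat \<Rightarrow> 'a \<Rightarrow> 'a"
    and T :: "nat \<Rightarrow> 'a \<Rightarrow> 'a"
    and L :: "nat \<Rightarrow> real"
    and \<theta> lam \<beta> \<alpha> :: "nat \<Rightarrow> real"
    and x :: "nat \<Rightarrow> 'a"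
    and u :: "nat \<Rightarrow> 'a"
    and w z d y :: "nat \<Rightarrow> nat \<Rightarrow> 'a"
  assumes M_pos: "M \<ge> 1"
    \<comment> \<open>(A1)\<close>
    and A1: "\<And>i. i \<in> {1..M} \<Longrightarrow> continuous_on UNIV (f i) \<and> convex_on UNIV (f i)"
    \<comment> \<open>(A2): gh i is the gradient of h i, (1/L i)-Lipschitz\<close>
    and A2_convex: "\<And>i. i \<in> {1..M} \<Longrightarrow> convex_on UNIV (h i)"
    and A2_grad: "\<And>i p. i \<in> {1..M} \<Longrightarrow> (h i has_derivative (\<lambda>v. inner (gh i p) v)) (at p)"
    and A2_L: "\<And>i. i \<in> {1..M} \<Longrightarrow> L i > 0"
    and A2_lip: "\<And>i p q. i \<in> {1..M} \<Longrightarrow> norm (gh i p - gh i q) \<le> (1 / L i) * norm (p - q)"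
    \<comment> \<open>(A3)\<close>
    and A3: "\<And>i. i \<in> {1..M} \<Longrightarrow> firmly_nonexpansive (T i)"
    \<comment> \<open>(A4)\<close>
    and A4_S: "(\<Inter>i\<in>{1..M}. Fix (T i)) \<noteq> {}"
    and A4_Omega: "\<exists>p\<in>(\<Inter>i\<in>{1..M}. Fix (T i)). \<forall>q\<in>(\<Inter>i\<in>{1..M}. Fix (T i)).
                     (\<Sum>i=1..M. f i p + h i p) \<le> (\<Sum>i=1..M. f i q + h i q)"
    \<comment> \<open>Condition (C): sequences indexed from n = 1\<close>
    and C_dec: "\<And>n. n \<ge> 1 \<Longrightarrow> \<theta> (Suc n) \<le> \<theta> n \<and> lam (Suc n) \<le> lam n
                                \<and> \<beta> (Suc n) \<le> \<beta> n \<and> \<alpha> (Suc n) \<le> \<alpha> n"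
    and C_lim: "\<theta> \<longlonglongrightarrow> 0" "lam \<longlonglongrightarrow> 0" "\<beta> \<longlonglongrightarrow> 0" "\<alpha> \<longlonglongrightarrow> 0"
    and C_theta: "\<And>n. n \<ge> 1 \<Longrightarrow> 0 \<le> \<theta> n \<and> \<theta> n < 1"
    and C_lambda: "\<And>n. n \<ge> 1 \<Longrightarrow> 0 < lam n \<and> lam n \<le> 2 * Min (L ` {1..M})"
    and C_beta: "\<And>n. n \<ge> 1 \<Longrightarrow> 0 < \<beta> n \<and> \<beta> n \<le> 1"
    and C_alpha: "\<And>n. n \<ge> 1 \<Longrightarrow> 0 < \<alpha> n \<and> \<alpha> n \<le> 1"
    and C1: "\<not> summable \<alpha>"
    and C2: "(\<lambda>n. (1 / \<alpha> (Suc n)) * \<bar>1 / lam (Suc n) - 1 / lam n\<bar>) \<longlonglongrightarrow> 0"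
    and C3: "(\<lambda>n. (1 / lam (Suc n)) * \<bar>1 - \<alpha> n / \<alpha> (Suc n)\<bar>) \<longlonglongrightarrow> 0"
    and C4: "(\<lambda>n. \<alpha> n / lam n) \<longlonglongrightarrow> 0"
    and C5: "(\<lambda>n. \<theta> n / (\<alpha> (Suc n) * lam (Suc n))) \<longlonglongrightarrow> 0"
    and C6: "\<exists>\<sigma>\<ge>1. \<forall>n\<ge>1. lam n / lam (Suc n) \<le> \<sigma>"
    and C7: "(\<lambda>n. \<beta> n / \<alpha> (Suc n)) \<longlonglongrightarrow> 0"
    \<comment> \<open>The algorithm (x 1, w i 0, z i 0, u i arbitrary initial data)\<close>
    and alg_d1: "\<And>i. i \<in> {1..M} \<Longrightarrow> d i 1 = - gh i (z i 0)"
    and alg_w1: "\<And>n. n \<ge> 1 \<Longrightarrow> w 1 n = x n"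
    and alg_z: "\<And>i n. i \<in> {1..M} \<Longrightarrow> n \<ge> 1 \<Longrightarrow>
                  z i n = w i n + \<theta> n *\<^sub>R (w i n - w i (n - 1))"
    and alg_d: "\<And>i n. i \<in> {1..M} \<Longrightarrow> n \<ge> 1 \<Longrightarrow>
                  d i (Suc n) = - gh i (z i n) + \<beta> n *\<^sub>R d i n"
    and alg_y: "\<And>i n. i \<in> {1..M} \<Longrightarrow> n \<ge> 1 \<Longrightarrow>
                  y i n = prox (lam n) (f i) (z i n + lam n *\<^sub>R d i (Suc n))"
    and alg_w: "\<And>i n. i \<in> {1..M} \<Longrightarrow> n \<ge> 1 \<Longrightarrow>
                  w (Suc i) n = \<alpha> n *\<^sub>R u i + (1 - \<alpha> n) *\<^sub>R T i (y i n)"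
    and alg_x: "\<And>n. n \<ge> 1 \<Longrightarrow> x (Suc n) = w (Suc M) n"
    \<comment> \<open>boundedness of the y-sequences\<close>
    and y_bdd: "\<And>i. i \<in> {1..M} \<Longrightarrow> bounded (y i ` {1..})"
  shows "\<forall>i\<in>{1..M}.
           (\<lambda>n. norm (z i n - y i n)) \<longlonglongrightarrow> 0 \<and>
           (\<lambda>n. norm (x n - w i n)) \<longlonglongrightarrow> 0 \<and>
           (\<lambda>n. norm (x n - z i n)) \<longlonglongrightarrow> 0 \<and>
           (\<lambda>n. norm (T i (x n) - x n)) \<longlonglongrightarrow> 0"
proof -
  \<comment> \<open>The minimality part of (A4), (C4), (C6), the monotonicity of lam and alpha and the value of
    d i 1 are not needed.\<close>
  have steps: "step_sizes \<theta> lam \<beta> \<alpha>"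
    by unfold_locales (use C_dec C_lim C_theta C_lambda C_beta C_alpha C1 C2 C3 C5 C7 in \<open>auto intro: less_imp_le\<close>)
  have stage: "incremental_stage \<theta> lam \<beta> \<alpha> (f i) (h i) (gh i) (T i) (L i) (u i)
      (w i) (z i) (d i) (y i) (w (Suc i))" if i: "i \<in> {1..M}" for i
  proof (intro incremental_stage.intro[OF steps] incremental_stage_axioms.intro)
    have "Min (L ` {1..M}) \<le> L i"
      using i by (intro Min_le) auto
    then show "lam n \<le> 2 * L i" if "n \<ge> 1" for n
      using C_lambda[OF that] by linarith
  qed (use i A1 A2_convex A2_grad A2_L A2_lip A3 alg_z alg_d alg_y alg_w y_bdd in auto)
  interpret incremental_algorithm \<theta> lam \<beta> \<alpha> M f h gh T L u x w z d y
  proof (intro incremental_algorithm.intro[OF steps] incremental_algorithm_axioms.intro)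
    show "\<exists>p. \<forall>i\<in>{1..M}. T i p = p"
      using A4_S by (auto simp: Fix_def)
  qed (use M_pos stage alg_w1 alg_x in auto)
  show ?thesis
    using residuals_tendsto_zero(1) x_minus_w x_minus_z T_x_minus_x by (auto intro: tendsto_norm_zero)
qed

end
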